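(* Under the standing assumptions below, for every $\gamma\in\mathbb R^I_+$, $x_0\in\mathcal X$, $s_0\in\mathcal S$, the maximum value $V(\gamma,x_0,s_0)$ of the ex-ante lottery problem equals $D(\gamma,x_0,s_0)$.
   Context: Setup. Let $\mathcal S$ be a finite set and $(s_t)_{t\ge0}$ a Markov chain on $\mathcal S$ with transition probabilities $\pi(s'|s)>0$ for all $s,s'\in\mathcal S$; for $s^t=(s_0,\dots,s_t)\in\mathcal S^{t+1}$ write $\pi^t(s^t|s_0)$ for its probability given $s_0$ and $\mathbb E_{s^t}$ (or $\mathbb E_{s_t}$) for expectation over future shocks given $s^t$. Let $\mathcal A\subset\mathbb R^n$ be a finite set, $\mathcal X\subseteq\mathbb R^m$ a countable set, $\zeta:\mathcal X\times\mathcal A\times\mathcal S\to\mathcal X$, $p:\mathcal X\times\mathcal A\times\mathcal S\to\mathbb R$, $r,g^1,\dots,g^I$ bounded real functions on $\mathcal X\times\mathcal A\times\mathcal S$, $\bar g^i\in\mathbb R$, $\beta\in(0,1)$. A plan is $a=(a(s^t))_{t,s^t}$, $a(s^t)\in\mathcal A$, inducing $x(s^0)=x_0$, $x(s^{t+1})=\zeta(x(s^t),a(s^t),s_t)$. $\tilde{\mathcal A}(x,s)=\{a\in\mathcal A:p(x,a,s)\ge0\}$; $\tilde{\mathcal A}^\infty(x_0)$ is the set of plans with $a(s^t)\in\tilde{\mathcal A}(x(s^t),s_t)$ for all $t,s^t$. A plan is feasible for $(x_0,s_0)$ if it lies in $\tilde{\mathcal A}^\infty(x_0)$ and $\mathbb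 E_{s^t}\sum_{n\ge0}\beta^ng^i(x(s^{t+n}),a(s^{t+n}),s_{t+n})\ge\bar g^i$ for all $t,s^t,i$. Standing assumption: for every $(x_0,s_0)$ a feasible plan exists. Pre-action histories $h^t=(s_0,a_0,\dots,s_{t-1},a_{t-1},s_t)\in\mathcal H^t=\mathcal S^{t+1}\times\mathcal A^t$; a plan generates $h^t=(s_0,a(s^0),\dots,a(s^{t-1}),s_t)$ along $s^t$. Dual value: $\Lambda$ is the set of $(\lambda^i(h^t))_{t,h^t,i}$, $\lambda^i(h^t)\ge0$, $\sum_t\sum_{h^t}\sum_i\beta^t\lambda^i(h^t)\pi^t(s^t|s_0)<\infty$. $L(a,\lambda;\gamma,x_0,s_0)=\mathbb E_{s_0}\sum_t\beta^t\big[r(x(s^t),a(s^t),s_t)+\sum_i\gamma^ig^i(x(s^t),a(s^t),s_t)+\sum_i\lambda^i(h^t)(\sum_{n\ge0}\beta^ng^i(x(s^{t+n}),a(s^{t+n}),s_{t+n})-\bar g^i)\big]$ and $D(\gamma,x_0,s_0)=\inf_{\lambda\in\Lambda}\sup_{a\in\tilde{\mathcal A}^\infty(x_0)}L$. Ex-ante lottery problem. Give $\tilde{\mathcal A}^\infty(x_0)$ the product topology and let $\mathcal P(\tilde{\mathcal A}^\infty(x_0))$ be the set of Borel probability measures on it; a random plan $a\sim P$ is drawn independently of the shocks. For $\gamma\in\mathbb R^I$, the ex-ante lottery problem is to maximize $\mathbb E^{a\sim P}_{s_0}\sum_{t\ge0}\beta^t\big(r(x(s^t),a(s^t),s_t)+\sum_i\gamma^ig^i(x(s^t),a(s^t),s_t)\big)$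 over $P\in\mathcal P(\tilde{\mathcal A}^\infty(x_0))$ subject to: for all $t\ge0$, all $h^t=(s_0,\tilde a_0,\dots,s_{t-1},\tilde a_{t-1},s_t)\in\mathcal H^t$ and all $i$, $\mathbb E^{a\sim P}_{s^t}\Big[\mathbf 1\{(a(s^0),\dots,a(s^{t-1}))=(\tilde a_0,\dots,\tilde a_{t-1})\}\Big(\sum_{n\ge0}\beta^ng^i(x(s^{t+n}),a(s^{t+n}),s_{t+n})-\bar g^i\Big)\Big]\ge0$, where $s^t$ is the shock history contained in $h^t$ and the expectation is over $a\sim P$ and future shocks given $s^t$. (A maximizer exists.) *)

theory Defs
  imports "HOL-Analysis.Analysis" "HOL-Probability.Probability"
begin

text \<open>Shock histories s^t = (s_0,...,s_t) are represented as pairs (s_0, [s_1,...,s_t]);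
  t is the length of the list component.
  Transition probabilities: tp s s' = pi(s'|s).\<close>

type_synonym 's hist = "'s \<times> 's list"

definition hlen :: "'s hist \<Rightarrow> nat" where
  "hlen h = length (snd h)"

definition hlast :: "'s hist \<Rightarrow> 's" where
  "hlast h = last (fst h # snd h)"

definition hprefix :: "'s hist \<Rightarrow> nat \<Rightarrow> 's hist" where
  "hprefix h k = (fst h, take k (snd h))"

definition hext :: "'s hist \<Rightarrow> 's list \<Rightarrow> 's hist" where
  "hext h c = (fst h, snd h @ c)"

definition shock_hists :: "nat \<Rightarrow> 's hist set" where
  "shock_hists t = {h. hlen h = t}"

fun xst :: "(real^'m \<Rightarrow> real^'n \<Rightarrow> 's \<Rightarrow> real^'m) \<Rightarrow> real^'m \<Rightarrow> ('s hist \<Rightarrow> real^'n)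
             \<Rightarrow> 's hist \<Rightarrow> nat \<Rightarrow> real^'m" where
  "xst \<zeta> x0 a h 0 = x0"
| "xst \<zeta> x0 a h (Suc k) = \<zeta> (xst \<zeta> x0 a h k) (a (hprefix h k)) (hlast (hprefix h k))"

definition xpath :: "(real^'m \<Rightarrow> real^'n \<Rightarrow> 's \<Rightarrow> real^'m) \<Rightarrow> real^'m \<Rightarrow> ('s hist \<Rightarrow> real^'n)
                     \<Rightarrow> 's hist \<Rightarrow> real^'m" where
  "xpath \<zeta> x0 a h = xst \<zeta> x0 a h (hlen h)"

fun trans_prob :: "('s \<Rightarrow> 's \<Rightarrow> real) \<Rightarrow> 's \<Rightarrow> 's list \<Rightarrow> real" where
  "trans_prob tp s [] = 1"
| "trans_prob tp s (s' # c) = tp s s' * trans_prob tp s' c"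

definition pit :: "('s \<Rightarrow> 's \<Rightarrow> real) \<Rightarrow> 's \<Rightarrow> 's hist \<Rightarrow> real" where
  "pit tp s0 h = (if fst h = s0 then trans_prob tp s0 (snd h) else 0)"

text \<open>E_{s^t} sum_{n\<ge>0} beta^n f(x(s^{t+n}), a(s^{t+n}), s_{t+n}), written out as the series of
  conditional expectations (the shock space is finite, f is bounded)\<close>
definition fut :: "('s \<Rightarrow> 's \<Rightarrow> real) \<Rightarrow> real \<Rightarrow> (real^'m \<Rightarrow> real^'n \<Rightarrow> 's \<Rightarrow> real^'m) \<Rightarrow> real^'m
                   \<Rightarrow> ('s hist \<Rightarrow> real^'n) \<Rightarrow> (real^'m \<Rightarrow> real^'n \<Rightarrow> 's \<Rightarrow> real) \<Rightarrow> 's hist \<Rightarrow> real" where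
  "fut tp \<beta> \<zeta> x0 a f h =
     (\<Sum>n. \<beta> ^ n * (\<Sum>c\<in>{c :: 's list. length c = n}.
        trans_prob tp (hlast h) c *
        f (xpath \<zeta> x0 a (hext h c)) (a (hext h c)) (hlast (hext h c))))"

definition plan_acts :: "('s hist \<Rightarrow> real^'n) \<Rightarrow> 's hist \<Rightarrow> (real^'n) list" where
  "plan_acts a h = map (\<lambda>k. a (hprefix h k)) [0..<hlen h]"

definition Ainf :: "(real^'n) set \<Rightarrow> (real^'m \<Rightarrow> real^'n \<Rightarrow> 's \<Rightarrow> real) \<Rightarrow>
                    (real^'m \<Rightarrow> real^'n \<Rightarrow> 's \<Rightarrow> real^'m) \<Rightarrow> real^'m \<Rightarrow> ('s hist \<Rightarrow> real^'n) set" where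
  "Ainf A p \<zeta> x0 = {a. \<forall>h. a h \<in> A \<and> p (xpath \<zeta> x0 a h) (a h) (hlast h) \<ge> 0}"

definition feasible_plan where
  "feasible_plan tp \<beta> A p \<zeta> I g gbar x0 s0 a \<longleftrightarrow>
     a \<in> Ainf A p \<zeta> x0 \<and> (\<forall>h. fst h = s0 \<longrightarrow> (\<forall>i<I. fut tp \<beta> \<zeta> x0 a (g i) h \<ge> gbar i))"

text \<open>pre-action histories h^t = (s^t, (a_0,...,a_{t-1})) in H^t = S^{t+1} x A^t\<close>
definition preH :: "(real^'n) set \<Rightarrow> nat \<Rightarrow> ('s hist \<times> (real^'n) list) set" where
  "preH A t = {(h, as). hlen h = t \<and> length as = t \<and> set as \<subseteq> A}"

definition Lambda where
  "Lambda tp \<beta> A I s0 =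
     {lam :: nat \<Rightarrow> ('s hist \<times> (real^'n) list) \<Rightarrow> real.
        (\<forall>i hh. 0 \<le> lam i hh) \<and>
        summable (\<lambda>t. \<Sum>hh\<in>preH A t. \<Sum>i<I. \<beta> ^ t * lam i hh * pit tp s0 (fst hh))}"

definition Lag where
  "Lag tp \<beta> \<zeta> r I g gbar \<gamma> x0 s0 a lam =
     (\<Sum>t. \<beta> ^ t * (\<Sum>h\<in>shock_hists t. pit tp s0 h *
        (r (xpath \<zeta> x0 a h) (a h) (hlast h)
         + (\<Sum>i<I. \<gamma> i * g i (xpath \<zeta> x0 a h) (a h) (hlast h))
         + (\<Sum>i<I. lam i (h, plan_acts a h) * (fut tp \<beta> \<zeta> x0 a (g i) h - gbar i)))))"

definition Dval where
  "Dval tp \<beta> A p \<zeta> r I g gbar \<gamma> x0 s0 =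
     (INF lam\<in>Lambda tp \<beta> A I s0. SUP a\<in>Ainf A p \<zeta> x0.
        ereal (Lag tp \<beta> \<zeta> r I g gbar \<gamma> x0 s0 a lam))"

definition Jval where
  "Jval tp \<beta> \<zeta> r I g \<gamma> x0 s0 a =
     (\<Sum>t. \<beta> ^ t * (\<Sum>h\<in>shock_hists t. pit tp s0 h *
        (r (xpath \<zeta> x0 a h) (a h) (hlast h)
         + (\<Sum>i<I. \<gamma> i * g i (xpath \<zeta> x0 a h) (a h) (hlast h)))))"

text \<open>Borel probability measures on tilde A^infinity(x0) (product topology, subspace Borel sets)
  satisfying the ex-ante lottery constraints; the random plan is independent of the shocks,
  so expectations over (a, shocks) are integrals over P of the shock expectations.\<close>
definition lottery_feasible where
  "lottery_feasible tp \<beta> A p \<zeta> I g gbar x0 s0 (P :: ('s hist \<Rightarrow> real^'n) measure) \<longleftrightarrow>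
     prob_space P \<and> sets P = sets (restrict_space borel (Ainf A p \<zeta> x0)) \<and>
     (\<forall>t. \<forall>(h, as)\<in>preH A t. fst h = s0 \<longrightarrow> (\<forall>i<I.
        (\<integral>a. (if plan_acts a h = as then 1 else 0) *
               (fut tp \<beta> \<zeta> x0 a (g i) h - gbar i) \<partial>P) \<ge> 0))"

definition Vval where
  "Vval tp \<beta> A p \<zeta> r I g gbar \<gamma> x0 s0 =
     (SUP P\<in>{P. lottery_feasible tp \<beta> A p \<zeta> I g gbar x0 s0 P}.
        ereal (\<integral>a. Jval tp \<beta> \<zeta> r I g \<gamma> x0 s0 a \<partial>P))"

end

theory Submission
  imports Defs
begin

text \<open>
  Weak duality \<open>V \<le> D\<close>: for a feasible lottery \<open>P\<close> and multipliers \<open>\<lambda> \<in> \<Lambda>\<close>, the penalty part of the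
  Lagrangian has nonnegative \<open>P\<close>-integral, because each summand is a nonnegative weight times
  an integrated ex-ante constraint; hence \<open>\<integral>J dP \<le> \<integral>L(\<cdot>, \<lambda>) dP \<le> sup\<^sub>a L(a, \<lambda>)\<close>.

  Strong duality: fix \<open>c < D\<close>. Keeping only the constraints at histories of length at most \<open>T\<close>
  gives a game between plans and weight vectors on the objective and these finitely many
  constraints. Every weight vector has a plan with nonnegative payoff: a positive weight on the
  objective rescales to a finitely supported multiplier in \<open>\<Lambda>\<close>, and \<open>c < D\<close> supplies the plan;
  otherwise any feasible plan will do. Multiplicative weights then produce a uniform mixture of
  finitely many plans with value at least \<open>c - \<epsilon>\<close> violating none of these constraints by more
  than \<open>\<epsilon>\<close>. Take \<open>T = N\<close>, \<open>\<epsilon> = 1 / (N + 1)\<close>. Because \<open>A\<close> is finite there are finitely many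
  action prefixes of each length, so a diagonal subsequence makes all their empirical
  probabilities converge; the limits form a projective family whose Kolmogorov extension is
  carried by the admissible plans. The objective and every constraint are uniform limits of
  functions of finitely many actions, so the mixture averages converge to integrals under this
  limit lottery, which is therefore feasible with value at least \<open>c\<close>.
\<close>

lemma geometric_dominated_series:
  fixes u :: "nat \<Rightarrow> real"
  assumes \<beta>: "0 \<le> \<beta>" "\<beta> < 1" and u: "\<And>t. \<bar>u t\<bar> \<le> C * \<beta> ^ t"
  shows "summable u" "\<bar>suminf u\<bar> \<le> C / (1 - \<beta>)"
    "\<bar>suminf u - (\<Sum>t<T. u t)\<bar> \<le> C * \<beta> ^ T / (1 - \<beta>)"
proof -
  have geom: "summable (\<lambda>t. C * \<beta> ^ t)" using \<beta> by (intro summable_mult summable_geometric) auto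
  show su: "summable u" by (rule summable_comparison_test'[OF geom, of 0]) (use u in auto)
  have sa: "summable (\<lambda>t. \<bar>u t\<bar>)" by (rule summable_comparison_test'[OF geom, of 0]) (use u in auto)
  have "\<bar>suminf u\<bar> \<le> (\<Sum>t. \<bar>u t\<bar>)" using summable_rabs[OF sa] by simp
  also have "\<dots> \<le> (\<Sum>t. C * \<beta> ^ t)" by (rule suminf_le[OF u sa geom])
  also have "\<dots> = C / (1 - \<beta>)" using \<beta> by (simp add: suminf_mult suminf_geometric)
  finally show "\<bar>suminf u\<bar> \<le> C / (1 - \<beta>)" .
  have geomT: "summable (\<lambda>t. C * \<beta> ^ T * \<beta> ^ t)" using \<beta> by (intro summable_mult summable_geometric) auto
  have saT: "summable (\<lambda>t. \<bar>u (t + T)\<bar>)" using sa summable_iff_shift[of "\<lambda>t. \<bar>u t\<bar>" T] by simp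
  have "\<bar>suminf u - (\<Sum>t<T. u t)\<bar> = \<bar>\<Sum>t. u (t + T)\<bar>"
    using suminf_split_initial_segment[OF su, of T] by simp
  also have "\<dots> \<le> (\<Sum>t. \<bar>u (t + T)\<bar>)" using summable_rabs[OF saT] by simp
  also have "\<dots> \<le> (\<Sum>t. C * \<beta> ^ T * \<beta> ^ t)"
    by (rule suminf_le[OF _ saT geomT]) (metis u power_add mult.commute mult.left_commute)
  also have "\<dots> = C * \<beta> ^ T / (1 - \<beta>)" using \<beta> by (simp add: suminf_mult suminf_geometric)
  finally show "\<bar>suminf u - (\<Sum>t<T. u t)\<bar> \<le> C * \<beta> ^ T / (1 - \<beta>)" .
qed

lemma geometric_tail_le:
  fixes \<beta> :: real
  assumes "0 \<le> \<beta>" "\<beta> < 1" "e > 0"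
  shows "\<exists>T. B * \<beta> ^ T / (1 - \<beta>) \<le> e"
proof -
  have "(\<lambda>T. B * \<beta> ^ T / (1 - \<beta>)) \<longlonglongrightarrow> B * 0 / (1 - \<beta>)"
    using assms by (intro tendsto_intros LIMSEQ_power_zero) auto
  then have "eventually (\<lambda>T. B * \<beta> ^ T / (1 - \<beta>) < e) sequentially"
    using assms(3) by (auto dest: order_tendstoD(2))
  then show ?thesis by (meson eventually_sequentially less_imp_le order_refl)
qed

lemma exp_le_quadratic:
  fixes x :: real
  assumes "\<bar>x\<bar> \<le> 1"
  shows "exp x \<le> 1 + x + x\<^sup>2"
proof (cases "x \<ge> 0")
  case True
  then show ?thesis using exp_bound[of x] assms by simp
next
  case False
  then have pos: "0 < 1 - x" by simp
  have "exp x * (1 - x) \<le> exp x * exp (- x)"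
    using exp_ge_add_one_self[of "- x"] by (intro mult_left_mono) auto
  then have "exp x \<le> 1 / (1 - x)" using pos by (simp add: exp_minus_inverse le_divide_eq)
  also have "1 / (1 - x) \<le> 1 + x + x\<^sup>2"
  proof -
    have "(1 + x + x\<^sup>2) * (1 - x) = 1 - x * x\<^sup>2" by (simp add: algebra_simps power2_eq_square)
    moreover have "x * x\<^sup>2 \<le> 0" using False by (intro mult_nonpos_nonneg) auto
    ultimately show ?thesis using pos by (simp add: divide_le_eq)
  qed
  finally show ?thesis .
qed

lemma bounded_seq_convergent_subseq:
  fixes f :: "nat \<Rightarrow> 'i::countable \<Rightarrow> real"
  assumes "\<And>n i. \<bar>f n i\<bar> \<le> M"
  shows "\<exists>s. strict_mono s \<and> (\<forall>i. convergent (\<lambda>k. f (s k) i))"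
proof -
  have "compactin (product_topology (\<lambda>_. euclidean) UNIV) (PiE UNIV (\<lambda>_. {-M..M}) :: ('i \<Rightarrow> real) set)"
    by (simp add: compactin_PiE)
  then have "compact (PiE UNIV (\<lambda>_. {-M..M}) :: ('i \<Rightarrow> real) set)"
    by (simp add: euclidean_product_topology)
  moreover have "f n \<in> PiE UNIV (\<lambda>_. {-M..M})" for n
    using assms[of n] by (simp add: abs_le_iff minus_le_iff PiE_iff)
  ultimately obtain l s where s: "strict_mono s" and lim: "(f \<circ> s) \<longlonglongrightarrow> l"
    by (metis compact_imp_seq_compact seq_compactE)
  have "(\<lambda>k. (f \<circ> s) k i) \<longlonglongrightarrow> l i" for i
    by (rule continuous_on_tendsto_compose[OF continuous_on_product_coordinates lim]) auto
  with s show ?thesis by (auto simp: convergent_def)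
qed

lemma bounded_seq_convergent_subseq_on:
  fixes f :: "nat \<Rightarrow> 'i \<Rightarrow> real"
  assumes C: "countable C" and bnd: "\<And>n i. i \<in> C \<Longrightarrow> \<bar>f n i\<bar> \<le> M"
  shows "\<exists>s. strict_mono s \<and> (\<forall>i\<in>C. convergent (\<lambda>k. f (s k) i))"
proof (cases "C = {}")
  case True
  then show ?thesis using strict_mono_id by blast
next
  case False
  obtain s where s: "strict_mono s" "\<And>j. convergent (\<lambda>k. f (s k) (from_nat_into C j))"
    using bounded_seq_convergent_subseq[of "\<lambda>n j. f n (from_nat_into C j)" M]
      bnd from_nat_into[OF False] by blast
  have "convergent (\<lambda>k. f (s k) i)" if "i \<in> C" for i
    using s(2) from_nat_into_surj[OF C that] by metis
  with s(1) show ?thesis by blast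
qed

lemma uniform_bound_family:
  fixes f :: "nat \<Rightarrow> 'a \<Rightarrow> real"
  assumes "\<And>i. i < I \<Longrightarrow> \<exists>B. \<forall>x\<in>S. \<bar>f i x\<bar> \<le> B"
  obtains B where "0 \<le> B" "\<And>i x. i < I \<Longrightarrow> x \<in> S \<Longrightarrow> \<bar>f i x\<bar> \<le> B"
proof -
  obtain B where B: "\<And>i x. i < I \<Longrightarrow> x \<in> S \<Longrightarrow> \<bar>f i x\<bar> \<le> B i"
    using assms by metis
  have "\<bar>f i x\<bar> \<le> (\<Sum>j<I. \<bar>B j\<bar>)" if "i < I" "x \<in> S" for i x
    using B[OF that] member_le_sum[of i "{..<I}" "\<lambda>j. \<bar>B j\<bar>"] that(1) by force
  then show ?thesis by (intro that[of "\<Sum>j<I. \<bar>B j\<bar>"]) (auto intro: sum_nonneg)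
qed

lemma LIMSEQ_uniform_approx:
  fixes f :: "nat \<Rightarrow> real"
  assumes "\<And>e. e > 0 \<Longrightarrow> \<exists>g m. g \<longlonglongrightarrow> m \<and> (\<forall>k. \<bar>f k - g k\<bar> \<le> e) \<and> \<bar>l - m\<bar> \<le> e"
  shows "f \<longlonglongrightarrow> l"
proof (rule LIMSEQ_I)
  fix e :: real
  assume "e > 0"
  then obtain g m where g: "g \<longlonglongrightarrow> m" "\<And>k. \<bar>f k - g k\<bar> \<le> e / 3" "\<bar>l - m\<bar> \<le> e / 3"
    using assms[of "e / 3"] by auto
  obtain N where N: "\<And>k. k \<ge> N \<Longrightarrow> \<bar>g k - m\<bar> < e / 3"
    using LIMSEQ_D[OF g(1), of "e / 3"] \<open>e > 0\<close> by auto
  have "norm (f k - l) < e" if "k \<ge> N" for k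
    using g(2)[of k] g(3) N[OF that] by (simp add: abs_if split: if_splits)
  then show "\<exists>N. \<forall>k\<ge>N. norm (f k - l) < e" by blast
qed

lemma integral_le_SUP:
  assumes "prob_space M" "integrable M f"
  shows "ereal (integral\<^sup>L M f) \<le> (SUP a\<in>space M. ereal (f a))"
proof (cases "(SUP a\<in>space M. ereal (f a))")
  case (real s)
  interpret prob_space M by fact
  have "f a \<le> s" if "a \<in> space M" for a
    using SUP_upper[OF that, of "\<lambda>a. ereal (f a)"] real by simp
  then have "integral\<^sup>L M f \<le> (\<integral>a. s \<partial>M)"
    by (intro integral_mono assms(2)) auto
  then show ?thesis using real by (simp add: prob_space)
next
  case MInf
  interpret prob_space M by fact
  obtain a where "a \<in> space M" using not_empty by auto
  then have "ereal (f a) \<le> (SUP a\<in>space M. ereal (f a))" by (rule SUP_upper)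
  then show ?thesis using MInf by simp
qed simp

lemma abs_integral_diff_le:
  fixes f g :: "'a \<Rightarrow> real"
  assumes "prob_space M" "integrable M f" "integrable M g" "\<And>x. x \<in> space M \<Longrightarrow> \<bar>f x - g x\<bar> \<le> e"
  shows "\<bar>integral\<^sup>L M f - integral\<^sup>L M g\<bar> \<le> e"
proof -
  interpret prob_space M by fact
  have "\<bar>integral\<^sup>L M f - integral\<^sup>L M g\<bar> \<le> (\<integral>x. \<bar>f x - g x\<bar> \<partial>M)"
    using integral_norm_bound[of M "\<lambda>x. f x - g x"] assms(2,3) by simp
  also have "\<dots> \<le> (\<integral>x. e \<partial>M)"
    using assms(2-4) by (intro integral_mono) auto
  finally show ?thesis by (simp add: prob_space)
qed

lemma distr_measure_pmf_eq:
  assumes "map_pmf f p = map_pmf f' p'" "\<And>x. f x \<in> space N" "\<And>x. f' x \<in> space N"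
  shows "distr (measure_pmf p) N f = distr (measure_pmf p') N f'"
proof (rule measure_eqI)
  fix Y
  assume "Y \<in> sets (distr (measure_pmf p) N f)"
  then have Y: "Y \<in> sets N" by simp
  have "emeasure (distr (measure_pmf p) N f) Y = emeasure (measure_pmf (map_pmf f p)) Y"
    using assms(2) Y by (simp add: emeasure_distr emeasure_map_pmf)
  also have "\<dots> = emeasure (distr (measure_pmf p') N f') Y"
    using assms(1,3) Y by (simp add: emeasure_distr emeasure_map_pmf)
  finally show "emeasure (distr (measure_pmf p) N f) Y = emeasure (distr (measure_pmf p') N f') Y" .
qed simp

lemma finite_in_sets_PiM_borel:
  assumes "finite D" "finite Y" "Y \<subseteq> PiE D (\<lambda>_. UNIV)"
  shows "Y \<in> sets (Pi\<^sub>M D (\<lambda>_. borel :: 'a::t1_space measure))"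
proof -
  have "Y = (\<Union>v\<in>Y. PiE D (\<lambda>h. {v h}))"
  proof (intro equalityI subsetI)
    fix w
    assume "w \<in> Y"
    then show "w \<in> (\<Union>v\<in>Y. PiE D (\<lambda>h. {v h}))" using assms(3) by (auto simp: PiE_iff)
  next
    fix w
    assume "w \<in> (\<Union>v\<in>Y. PiE D (\<lambda>h. {v h}))"
    then obtain v where v: "v \<in> Y" "w \<in> PiE D (\<lambda>h. {v h})" by blast
    have "v \<in> extensional D" using v(1) assms(3) by (auto simp: PiE_def)
    then have "w = v" by (rule extensionalityI[rotated]) (use v(2) in \<open>auto simp: PiE_def\<close>)
    with v show "w \<in> Y" by simp
  qed
  also have "\<dots> \<in> sets (Pi\<^sub>M D (\<lambda>_. borel :: 'a measure))"
    by (intro sets.finite_UN assms(2) sets_PiM_I_finite assms(1)) auto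
  finally show ?thesis .
qed

definition list_avg :: "'a list \<Rightarrow> ('a \<Rightarrow> real) \<Rightarrow> real" where
  "list_avg L F = (\<Sum>a\<leftarrow>L. F a) / real (length L)"

lemma list_avg_sum: "list_avg L (\<lambda>a. \<Sum>v\<in>S. f v a) = (\<Sum>v\<in>S. list_avg L (f v))"
proof -
  have "(\<Sum>a\<leftarrow>L. \<Sum>v\<in>S. f v a) = (\<Sum>v\<in>S. \<Sum>a\<leftarrow>L. f v a)"
    by (induction L) (simp_all add: sum.distrib)
  then show ?thesis unfolding list_avg_def by (simp add: sum_divide_distrib)
qed

lemma list_avg_cmult: "list_avg L (\<lambda>a. c * f a) = c * list_avg L f"
  unfolding list_avg_def by (simp add: sum_list_const_mult)

lemma list_avg_diff: "list_avg L (\<lambda>a. f a - g a) = list_avg L f - list_avg L g"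
  unfolding list_avg_def by (simp add: sum_list_subtractf diff_divide_distrib)

lemma list_avg_cong: "(\<And>a. a \<in> set L \<Longrightarrow> F a = G a) \<Longrightarrow> list_avg L F = list_avg L G"
  unfolding list_avg_def by (metis map_cong)

lemma list_avg_const: "L \<noteq> [] \<Longrightarrow> list_avg L (\<lambda>a. c) = c"
  unfolding list_avg_def by (simp add: sum_list_triv)

lemma list_avg_mono: "(\<And>a. a \<in> set L \<Longrightarrow> F a \<le> G a) \<Longrightarrow> list_avg L F \<le> list_avg L G"
  unfolding list_avg_def by (intro divide_right_mono sum_list_mono) auto

lemma abs_list_avg_le: "\<bar>list_avg L F\<bar> \<le> list_avg L (\<lambda>a. \<bar>F a\<bar>)"
  using sum_list_abs[of "map F L"] unfolding list_avg_def
  by (simp add: abs_divide divide_right_mono comp_def)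

lemma abs_list_avg_diff_le:
  assumes "L \<noteq> []" "\<And>a. a \<in> set L \<Longrightarrow> \<bar>F a - G a\<bar> \<le> e"
  shows "\<bar>list_avg L F - list_avg L G\<bar> \<le> e"
proof -
  have "\<bar>list_avg L F - list_avg L G\<bar> \<le> list_avg L (\<lambda>a. \<bar>F a - G a\<bar>)"
    using abs_list_avg_le[of L "\<lambda>a. F a - G a"] by (simp add: list_avg_diff)
  also have "\<dots> \<le> list_avg L (\<lambda>a. e)" by (rule list_avg_mono) (rule assms(2))
  finally show ?thesis by (simp add: list_avg_const[OF assms(1)])
qed

section \<open>Multiplicative weights\<close>

definition mw_potential :: "real \<Rightarrow> ('k \<Rightarrow> 'p \<Rightarrow> real) \<Rightarrow> 'k set \<Rightarrow> 'p list \<Rightarrow> real" where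
  "mw_potential \<eta> \<psi> K L = (\<Sum>k\<in>K. exp (- \<eta> * (\<Sum>a\<leftarrow>L. \<psi> k a)))"

lemma mw_potential_snoc:
  assumes \<eta>: "0 \<le> \<eta>" "\<eta> * B \<le> 1"
    and bnd: "\<And>k. k \<in> K \<Longrightarrow> \<bar>\<psi> k a\<bar> \<le> B"
    and resp: "0 \<le> (\<Sum>k\<in>K. exp (- \<eta> * (\<Sum>b\<leftarrow>L. \<psi> k b)) * \<psi> k a)"
  shows "mw_potential \<eta> \<psi> K (L @ [a]) \<le> mw_potential \<eta> \<psi> K L * (1 + (\<eta> * B)\<^sup>2)"
proof -
  let ?w = "\<lambda>k. exp (- \<eta> * (\<Sum>b\<leftarrow>L. \<psi> k b))"
  have exp_step: "exp (- \<eta> * \<psi> k a) \<le> 1 - \<eta> * \<psi> k a + (\<eta> * B)\<^sup>2" if k: "k \<in> K" for k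
  proof -
    have abs_le: "\<bar>\<eta> * \<psi> k a\<bar> \<le> \<eta> * B"
      using bnd[OF k] \<eta>(1) by (simp add: abs_mult mult_left_mono)
    then have "\<bar>- \<eta> * \<psi> k a\<bar> \<le> 1" using \<eta>(2) by simp
    moreover have "(- \<eta> * \<psi> k a)\<^sup>2 \<le> (\<eta> * B)\<^sup>2"
      using power_mono[OF abs_le abs_ge_zero, of 2] by simp
    ultimately show ?thesis using exp_le_quadratic[of "- \<eta> * \<psi> k a"] by linarith
  qed
  have "mw_potential \<eta> \<psi> K (L @ [a]) = (\<Sum>k\<in>K. ?w k * exp (- \<eta> * \<psi> k a))"
    unfolding mw_potential_def by (simp add: algebra_simps flip: exp_add)
  also have "\<dots> \<le> (\<Sum>k\<in>K. ?w k * (1 - \<eta> * \<psi> k a + (\<eta> * B)\<^sup>2))"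
    by (intro sum_mono mult_left_mono exp_step) auto
  also have "\<dots> = mw_potential \<eta> \<psi> K L * (1 + (\<eta> * B)\<^sup>2) - \<eta> * (\<Sum>k\<in>K. ?w k * \<psi> k a)"
    unfolding mw_potential_def
    by (simp add: algebra_simps sum.distrib sum_distrib_left sum_distrib_right sum_subtractf)
  also have "\<dots> \<le> mw_potential \<eta> \<psi> K L * (1 + (\<eta> * B)\<^sup>2)"
    using resp \<eta>(1) by simp
  finally show ?thesis .
qed

lemma mw_regret:
  fixes \<eta> q :: real and n :: nat
  assumes K: "finite K" "k \<in> K" and \<eta>: "0 < \<eta>" and n: "n > 0" and q: "0 \<le> q"
    and W: "mw_potential \<eta> \<psi> K L \<le> card K * (1 + q) ^ n"
  shows "- (\<Sum>a\<leftarrow>L. \<psi> k a) / n \<le> ln (card K) / (\<eta> * n) + q / \<eta>"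
proof -
  have cardK: "0 < card K" using K card_gt_0_iff by blast
  have "exp (- \<eta> * (\<Sum>a\<leftarrow>L. \<psi> k a)) \<le> mw_potential \<eta> \<psi> K L"
    unfolding mw_potential_def by (rule member_le_sum) (use K in auto)
  also have "\<dots> \<le> card K * exp q ^ n"
    using W q exp_ge_add_one_self[of q] by (smt (verit) mult_left_mono of_nat_0_le_iff power_mono)
  also have "\<dots> = exp (ln (card K) + n * q)"
    using cardK by (simp add: exp_add exp_of_nat_mult)
  finally have "- \<eta> * (\<Sum>a\<leftarrow>L. \<psi> k a) \<le> ln (card K) + n * q" by simp
  then show ?thesis using \<eta> n by (simp add: field_simps)
qed

lemma mw_response:
  fixes \<eta> :: real
  assumes K: "finite K" "K \<noteq> {}"
    and resp: "\<And>\<mu>. (\<forall>k\<in>K. 0 \<le> \<mu> k) \<Longrightarrow> sum \<mu> K = 1 \<Longrightarrow> \<exists>a\<in>S. 0 \<le> (\<Sum>k\<in>K. \<mu> k * \<psi> k a)"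
  shows "\<exists>a\<in>S. 0 \<le> (\<Sum>k\<in>K. exp (- \<eta> * (\<Sum>b\<leftarrow>L. \<psi> k b)) * \<psi> k a)"
proof -
  let ?w = "\<lambda>k. exp (- \<eta> * (\<Sum>b\<leftarrow>L. \<psi> k b))"
  have W: "mw_potential \<eta> \<psi> K L > 0"
    unfolding mw_potential_def using K by (intro sum_pos) auto
  obtain a where a: "a \<in> S" "0 \<le> (\<Sum>k\<in>K. ?w k / mw_potential \<eta> \<psi> K L * \<psi> k a)"
    using resp[of "\<lambda>k. ?w k / mw_potential \<eta> \<psi> K L"] W
    by (auto simp: mw_potential_def simp flip: sum_divide_distrib)
  then have "0 \<le> (\<Sum>k\<in>K. ?w k * \<psi> k a) / mw_potential \<eta> \<psi> K L"
    by (simp add: sum_divide_distrib)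
  with a(1) W show ?thesis by (auto simp: zero_le_divide_iff)
qed

lemma mw_play_exists:
  fixes \<eta> B :: real
  assumes K: "finite K" "K \<noteq> {}" and \<eta>: "0 \<le> \<eta>" "\<eta> * B \<le> 1"
    and bnd: "\<And>k a. k \<in> K \<Longrightarrow> a \<in> S \<Longrightarrow> \<bar>\<psi> k a\<bar> \<le> B"
    and resp: "\<And>\<mu>. (\<forall>k\<in>K. 0 \<le> \<mu> k) \<Longrightarrow> sum \<mu> K = 1 \<Longrightarrow> \<exists>a\<in>S. 0 \<le> (\<Sum>k\<in>K. \<mu> k * \<psi> k a)"
  shows "\<exists>L. length L = n \<and> set L \<subseteq> S \<and> mw_potential \<eta> \<psi> K L \<le> card K * (1 + (\<eta> * B)\<^sup>2) ^ n"
proof (induction n)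
  case 0
  show ?case by (auto simp: mw_potential_def)
next
  case (Suc n)
  then obtain L where L: "length L = n" "set L \<subseteq> S"
    and W: "mw_potential \<eta> \<psi> K L \<le> card K * (1 + (\<eta> * B)\<^sup>2) ^ n"
    by blast
  obtain a where a: "a \<in> S" "0 \<le> (\<Sum>k\<in>K. exp (- \<eta> * (\<Sum>b\<leftarrow>L. \<psi> k b)) * \<psi> k a)"
    using mw_response[OF K resp] by blast
  have "mw_potential \<eta> \<psi> K (L @ [a]) \<le> mw_potential \<eta> \<psi> K L * (1 + (\<eta> * B)\<^sup>2)"
    by (rule mw_potential_snoc[OF \<eta> bnd[OF _ a(1)] a(2)])
  also have "\<dots> \<le> card K * (1 + (\<eta> * B)\<^sup>2) ^ n * (1 + (\<eta> * B)\<^sup>2)"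
    using W by (rule mult_right_mono) simp
  also have "\<dots> = card K * (1 + (\<eta> * B)\<^sup>2) ^ Suc n"
    by (simp add: mult_ac)
  finally show ?case using L a(1) by (intro exI[of _ "L @ [a]"]) simp
qed

text \<open>With step size \<open>\<eta>\<close> and \<open>n\<close> rounds the average regret is at most
  \<open>ln |K| / (\<eta> n) + \<eta> B\<^sup>2\<close>; both terms are made smaller than \<open>e / 2\<close>.\<close>

lemma multiplicative_weights:
  fixes \<psi> :: "'k \<Rightarrow> 'p \<Rightarrow> real"
  assumes K: "finite K" "K \<noteq> {}"
    and bnd: "\<And>k a. k \<in> K \<Longrightarrow> a \<in> S \<Longrightarrow> \<bar>\<psi> k a\<bar> \<le> B"
    and resp: "\<And>\<mu>. (\<forall>k\<in>K. 0 \<le> \<mu> k) \<Longrightarrow> sum \<mu> K = 1 \<Longrightarrow> \<exists>a\<in>S. 0 \<le> (\<Sum>k\<in>K. \<mu> k * \<psi> k a)"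
    and e: "e > 0"
  shows "\<exists>L. L \<noteq> [] \<and> set L \<subseteq> S \<and> (\<forall>k\<in>K. - e \<le> list_avg L (\<psi> k))"
proof -
  define B1 where "B1 = \<bar>B\<bar> + 1"
  define \<eta> where "\<eta> = min (1 / B1) (e / (2 * B1\<^sup>2))"
  have B1: "B1 > 0" and bnd1: "\<And>k a. k \<in> K \<Longrightarrow> a \<in> S \<Longrightarrow> \<bar>\<psi> k a\<bar> \<le> B1"
    using bnd unfolding B1_def by force+
  have \<eta>: "\<eta> > 0" "\<eta> * B1 \<le> 1" "\<eta> * B1\<^sup>2 \<le> e / 2"
    using B1 e by (auto simp: \<eta>_def min_def field_simps power2_eq_square)
  obtain n :: nat where n: "n > 2 * ln (card K) / (\<eta> * e)"
    using reals_Archimedean2 by blast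
  have "0 \<le> ln (real (card K))"
    using K by (simp add: card_gt_0_iff Suc_leI)
  then have npos: "n > 0" using n \<eta> e by (smt (verit) divide_nonneg_pos mult_pos_pos of_nat_0_less_iff)
  have regret_ln: "ln (card K) / (\<eta> * n) \<le> e / 2"
    using n \<eta> e npos by (simp add: field_simps)
  have regret_q: "(\<eta> * B1)\<^sup>2 / \<eta> \<le> e / 2"
    using \<eta> by (simp add: power2_eq_square mult_ac)
  obtain L where L: "length L = n" "set L \<subseteq> S"
    and W: "mw_potential \<eta> \<psi> K L \<le> card K * (1 + (\<eta> * B1)\<^sup>2) ^ n"
    using mw_play_exists[OF K less_imp_le[OF \<eta>(1)] \<eta>(2) bnd1 resp] by blast
  have "- e \<le> list_avg L (\<psi> k)" if "k \<in> K" for k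
  proof -
    have "- list_avg L (\<psi> k) \<le> ln (card K) / (\<eta> * n) + (\<eta> * B1)\<^sup>2 / \<eta>"
      using mw_regret[OF K(1) that \<eta>(1) npos _ W] L(1) by (simp add: list_avg_def)
    with regret_ln regret_q show ?thesis by linarith
  qed
  moreover have "L \<noteq> []" using L(1) npos by auto
  ultimately show ?thesis using L(2) by blast
qed

definition hists_upto :: "nat \<Rightarrow> 's hist set" where
  "hists_upto T = {h. hlen h \<le> T}"

lemma finite_shock_hists: "finite (shock_hists t :: 's::finite hist set)"
proof -
  have "shock_hists t = (UNIV :: 's set) \<times> {c. set c \<subseteq> UNIV \<and> length c = t}"
    by (auto simp: shock_hists_def hlen_def)
  then show ?thesis using finite_lists_length_eq[of "UNIV :: 's set" t] by simp
qed

lemma finite_hists_upto: "finite (hists_upto T :: 's::finite hist set)"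
proof -
  have "hists_upto T = (UNIV :: 's set) \<times> {c. set c \<subseteq> UNIV \<and> length c \<le> T}"
    by (auto simp: hists_upto_def hlen_def)
  then show ?thesis using finite_lists_length_le[of "UNIV :: 's set" T] by simp
qed

lemma sum_hists_upto:
  "(\<Sum>h\<in>hists_upto T. F h) = (\<Sum>t\<le>T. \<Sum>h\<in>shock_hists t. F (h :: 's::finite hist))"
proof -
  have "hists_upto T = (\<Union>t\<le>T. shock_hists t :: 's hist set)"
    by (auto simp: hists_upto_def shock_hists_def)
  then show ?thesis
    by (simp only:) (rule sum.UNION_disjoint, auto simp: finite_shock_hists, auto simp: shock_hists_def)
qed

lemma hlen_hext [simp]: "hlen (hext h c) = hlen h + length c"
  by (simp add: hlen_def hext_def)

lemma agree_on_hists_upto: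
  assumes agree: "\<forall>h'\<in>hists_upto T. a h' = b h'" and h: "hlen h \<le> T"
  shows "xpath \<zeta> x0 a h = xpath \<zeta> x0 b h" "a h = b h" "plan_acts a h = plan_acts b h"
proof -
  have before: "a (hprefix h k) = b (hprefix h k)" if "k < hlen h" for k
    using agree that h by (simp add: hists_upto_def hprefix_def hlen_def)
  have "xst \<zeta> x0 a h k = xst \<zeta> x0 b h k" if "k \<le> hlen h" for k
    using that by (induction k) (simp_all add: before)
  then show "xpath \<zeta> x0 a h = xpath \<zeta> x0 b h" by (simp add: xpath_def)
  show "a h = b h" using agree h unfolding hists_upto_def by blast
  show "plan_acts a h = plan_acts b h" by (simp add: plan_acts_def before)
qed

lemma trans_prob_pos: "(\<And>s s'. tp s s' > 0) \<Longrightarrow> trans_prob tp s c > 0"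
  by (induction c arbitrary: s) auto

lemma sum_trans_prob:
  fixes tp :: "'s::finite \<Rightarrow> 's \<Rightarrow> real"
  assumes "\<And>s. (\<Sum>s'\<in>UNIV. tp s s') = 1"
  shows "(\<Sum>c\<in>{c. length c = n}. trans_prob tp s c) = 1"
proof (induction n arbitrary: s)
  case 0
  have "{c :: 's list. length c = 0} = {[]}" by auto
  then show ?case by simp
next
  case (Suc n)
  have lists: "{c :: 's list. length c = Suc n} = (\<lambda>(x, c). x # c) ` (UNIV \<times> {c. length c = n})"
    by (auto simp: length_Suc_conv)
  have inj: "inj_on (\<lambda>(x, c). x # c) (UNIV \<times> {c :: 's list. length c = n})"
    by (auto simp: inj_on_def)
  have "(\<Sum>c\<in>{c. length c = Suc n}. trans_prob tp s c)
      = (\<Sum>(x, c)\<in>UNIV \<times> {c. length c = n}. tp s x * trans_prob tp x c)"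
    unfolding lists by (subst sum.reindex[OF inj]) (simp add: case_prod_unfold)
  also have "\<dots> = (\<Sum>x\<in>UNIV. tp s x * (\<Sum>c\<in>{c. length c = n}. trans_prob tp x c))"
    by (simp add: sum.cartesian_product[symmetric] sum_distrib_left)
  also have "\<dots> = 1" using Suc assms by simp
  finally show ?case .
qed

lemma hists_upto_Int: "T \<le> T' \<Longrightarrow> hists_upto T' \<inter> hists_upto T = hists_upto T"
  by (auto simp: hists_upto_def)

locale lottery_duality =
  fixes tp :: "'s::finite \<Rightarrow> 's \<Rightarrow> real"
    and A :: "(real^'n) set" and X :: "(real^'m) set"
    and \<zeta> :: "real^'m \<Rightarrow> real^'n \<Rightarrow> 's \<Rightarrow> real^'m"
    and p r :: "real^'m \<Rightarrow> real^'n \<Rightarrow> 's \<Rightarrow> real"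
    and I :: nat and g :: "nat \<Rightarrow> real^'m \<Rightarrow> real^'n \<Rightarrow> 's \<Rightarrow> real"
    and gbar :: "nat \<Rightarrow> real" and \<beta> :: real
    and \<gamma> :: "nat \<Rightarrow> real" and x0 :: "real^'m" and s0 :: 's
    and Br Bg :: real
  assumes trans_pos: "\<And>s s'. tp s s' > 0"
    and trans_sum: "\<And>s. (\<Sum>s'\<in>UNIV. tp s s') = 1"
    and A_fin: "finite A"
    and \<zeta>_X: "\<And>x a s. x \<in> X \<Longrightarrow> a \<in> A \<Longrightarrow> \<zeta> x a s \<in> X"
    and r_bound: "\<And>x a s. x \<in> X \<Longrightarrow> a \<in> A \<Longrightarrow> \<bar>r x a s\<bar> \<le> Br"
    and g_bound: "\<And>i x a s. i < I \<Longrightarrow> x \<in> X \<Longrightarrow> a \<in> A \<Longrightarrow> \<bar>g i x a s\<bar> \<le> Bg"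
    and Br_nonneg: "0 \<le> Br" and Bg_nonneg: "0 \<le> Bg"
    and \<beta>: "0 < \<beta>" "\<beta> < 1"
    and standing: "\<And>x s. x \<in> X \<Longrightarrow> \<exists>a. feasible_plan tp \<beta> A p \<zeta> I g gbar x s a"
    and \<gamma>_nonneg: "\<And>i. i < I \<Longrightarrow> \<gamma> i \<ge> 0"
    and x0: "x0 \<in> X"
begin

abbreviation "plans \<equiv> Ainf A p \<zeta> x0"
abbreviation "state a h \<equiv> xpath \<zeta> x0 a h"
abbreviation "J a \<equiv> Jval tp \<beta> \<zeta> r I g \<gamma> x0 s0 a"

lemma plan_in_A: "a \<in> plans \<Longrightarrow> a h \<in> A"
  unfolding Ainf_def by blast

lemma state_in_X: "a \<in> plans \<Longrightarrow> state a h \<in> X"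
proof -
  assume a: "a \<in> plans"
  have "xst \<zeta> x0 a h k \<in> X" for k
    by (induction k) (auto simp: x0 \<zeta>_X plan_in_A[OF a])
  then show ?thesis by (simp add: xpath_def)
qed

lemma trans_prob_nonneg: "trans_prob tp s c \<ge> 0"
  by (rule less_imp_le[OF trans_prob_pos[OF trans_pos]])

lemma pit_nonneg: "pit tp s0 h \<ge> 0"
  by (simp add: pit_def trans_prob_nonneg)

lemma pit_pos: "fst h = s0 \<Longrightarrow> pit tp s0 h > 0"
  by (simp add: pit_def trans_prob_pos[OF trans_pos])

lemma sum_pit: "(\<Sum>h\<in>shock_hists t. pit tp s0 h) = 1"
proof -
  have "shock_hists t = (UNIV :: 's set) \<times> {c. length c = t}"
    by (auto simp: shock_hists_def hlen_def)
  then have "(\<Sum>h\<in>shock_hists t. pit tp s0 h) = (\<Sum>s\<in>UNIV. \<Sum>c\<in>{c. length c = t}. pit tp s0 (s, c))"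
    by (simp only:) (subst sum.cartesian_product, simp add: case_prod_unfold)
  also have "\<dots> = (\<Sum>s\<in>UNIV. if s = s0 then (\<Sum>c\<in>{c. length c = t}. trans_prob tp s0 c) else 0)"
    by (rule sum.cong) (auto simp: pit_def)
  also have "\<dots> = 1" by (simp add: sum_trans_prob[OF trans_sum])
  finally show ?thesis .
qed

definition fut_term :: "(real^'m \<Rightarrow> real^'n \<Rightarrow> 's \<Rightarrow> real) \<Rightarrow> ('s hist \<Rightarrow> real^'n) \<Rightarrow> 's hist \<Rightarrow> nat \<Rightarrow> real" where
  "fut_term f a h n = (\<Sum>c\<in>{c :: 's list. length c = n}.
     trans_prob tp (hlast h) c * f (state a (hext h c)) (a (hext h c)) (hlast (hext h c)))"

lemma abs_fut_term_le:
  assumes "a \<in> plans" "\<And>x b s. x \<in> X \<Longrightarrow> b \<in> A \<Longrightarrow> \<bar>f x b s\<bar> \<le> B"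
  shows "\<bar>fut_term f a h n\<bar> \<le> B"
proof -
  have "\<bar>fut_term f a h n\<bar> \<le> (\<Sum>c\<in>{c :: 's list. length c = n}. trans_prob tp (hlast h) c * B)"
    unfolding fut_term_def
    by (rule order.trans[OF sum_abs sum_mono])
       (auto simp: abs_mult trans_prob_nonneg intro!: mult_left_mono assms state_in_X plan_in_A)
  also have "\<dots> = B" by (simp add: sum_distrib_right[symmetric] sum_trans_prob[OF trans_sum])
  finally show ?thesis .
qed

lemma fut_bounds:
  assumes "a \<in> plans" "\<And>x b s. x \<in> X \<Longrightarrow> b \<in> A \<Longrightarrow> \<bar>f x b s\<bar> \<le> B"
  shows "\<bar>fut tp \<beta> \<zeta> x0 a f h\<bar> \<le> B / (1 - \<beta>)"
    "\<bar>fut tp \<beta> \<zeta> x0 a f h - (\<Sum>n<N. \<beta> ^ n * fut_term f a h n)\<bar> \<le> B * \<beta> ^ N / (1 - \<beta>)"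
proof -
  have "\<bar>\<beta> ^ n * fut_term f a h n\<bar> \<le> B * \<beta> ^ n" for n
    using abs_fut_term_le[OF assms] \<beta> by (simp add: abs_mult mult.commute mult_left_mono)
  from geometric_dominated_series[of \<beta>, OF _ _ this] \<beta>
  show "\<bar>fut tp \<beta> \<zeta> x0 a f h\<bar> \<le> B / (1 - \<beta>)"
    "\<bar>fut tp \<beta> \<zeta> x0 a f h - (\<Sum>n<N. \<beta> ^ n * fut_term f a h n)\<bar> \<le> B * \<beta> ^ N / (1 - \<beta>)"
    by (simp_all add: fut_def fut_term_def)
qed

definition period_payoff :: "nat \<Rightarrow> ('s hist \<Rightarrow> real^'n) \<Rightarrow> real" where
  "period_payoff t a = (\<Sum>h\<in>shock_hists t. pit tp s0 h *
     (r (state a h) (a h) (hlast h) + (\<Sum>i<I. \<gamma> i * g i (state a h) (a h) (hlast h))))"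

definition payoff_bound :: real where
  "payoff_bound = Br + (\<Sum>i<I. \<gamma> i) * Bg"

lemma payoff_bound_nonneg: "0 \<le> payoff_bound"
proof -
  have "0 \<le> sum \<gamma> {..<I}" by (rule sum_nonneg) (simp add: \<gamma>_nonneg)
  then show ?thesis unfolding payoff_bound_def using Br_nonneg Bg_nonneg by simp
qed

lemma abs_period_payoff_le:
  assumes a: "a \<in> plans"
  shows "\<bar>period_payoff t a\<bar> \<le> payoff_bound"
proof -
  have "\<bar>r (state a h) (a h) (hlast h) + (\<Sum>i<I. \<gamma> i * g i (state a h) (a h) (hlast h))\<bar>
      \<le> payoff_bound" for h
  proof -
    have "\<bar>\<Sum>i<I. \<gamma> i * g i (state a h) (a h) (hlast h)\<bar> \<le> (\<Sum>i<I. \<gamma> i * Bg)"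
      by (rule order.trans[OF sum_abs sum_mono])
         (auto simp: abs_mult \<gamma>_nonneg intro!: mult_left_mono g_bound state_in_X plan_in_A a)
    moreover have "\<bar>r (state a h) (a h) (hlast h)\<bar> \<le> Br"
      by (intro r_bound state_in_X plan_in_A a)
    ultimately show ?thesis unfolding payoff_bound_def by (simp add: sum_distrib_right)
  qed
  then have "\<bar>period_payoff t a\<bar> \<le> (\<Sum>h\<in>shock_hists t. pit tp s0 h * payoff_bound)"
    unfolding period_payoff_def
    by (intro order.trans[OF sum_abs sum_mono]) (auto simp: abs_mult pit_nonneg intro!: mult_left_mono)
  also have "\<dots> = payoff_bound" by (simp add: sum_distrib_right[symmetric] sum_pit)
  finally show ?thesis .
qed

lemma Jval_bounds:
  assumes "a \<in> plans"
  shows "summable (\<lambda>t. \<beta> ^ t * period_payoff t a)" "\<bar>J a\<bar> \<le> payoff_bound / (1 - \<beta>)"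
    "\<bar>J a - (\<Sum>t<T. \<beta> ^ t * period_payoff t a)\<bar> \<le> payoff_bound * \<beta> ^ T / (1 - \<beta>)"
proof -
  have "\<bar>\<beta> ^ t * period_payoff t a\<bar> \<le> payoff_bound * \<beta> ^ t" for t
    using abs_period_payoff_le[OF assms] \<beta> by (simp add: abs_mult mult.commute mult_left_mono)
  from geometric_dominated_series[of \<beta>, OF _ _ this] \<beta>
  show "summable (\<lambda>t. \<beta> ^ t * period_payoff t a)" "\<bar>J a\<bar> \<le> payoff_bound / (1 - \<beta>)"
    "\<bar>J a - (\<Sum>t<T. \<beta> ^ t * period_payoff t a)\<bar> \<le> payoff_bound * \<beta> ^ T / (1 - \<beta>)"
    by (simp_all add: Jval_def period_payoff_def)
qed

section \<open>Functions of finitely many actions\<close>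

definition depends_upto :: "nat \<Rightarrow> (('s hist \<Rightarrow> real^'n) \<Rightarrow> real) \<Rightarrow> bool" where
  "depends_upto T G \<longleftrightarrow> (\<forall>a\<in>plans. \<forall>b\<in>plans. (\<forall>h\<in>hists_upto T. a h = b h) \<longrightarrow> G a = G b)"

definition cylinder_approximable :: "(('s hist \<Rightarrow> real^'n) \<Rightarrow> real) \<Rightarrow> bool" where
  "cylinder_approximable F \<longleftrightarrow> (\<forall>e>0. \<exists>T G. depends_upto T G \<and> (\<forall>a\<in>plans. \<bar>F a - G a\<bar> \<le> e))"

lemma depends_upto_imp_cylinder_approximable:
  "depends_upto T G \<Longrightarrow> cylinder_approximable G"
  unfolding cylinder_approximable_def by (intro allI impI exI[of _ T] exI[of _ G]) simp

lemma period_payoff_cong: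
  assumes "\<forall>h\<in>hists_upto T. a h = b h" "t \<le> T"
  shows "period_payoff t a = period_payoff t b"
  unfolding period_payoff_def
proof (intro sum.cong refl)
  fix h :: "'s hist"
  assume "h \<in> shock_hists t"
  then have "hlen h \<le> T" using assms(2) by (simp add: shock_hists_def)
  then show "pit tp s0 h * (r (state a h) (a h) (hlast h) + (\<Sum>i<I. \<gamma> i * g i (state a h) (a h) (hlast h)))
      = pit tp s0 h * (r (state b h) (b h) (hlast h) + (\<Sum>i<I. \<gamma> i * g i (state b h) (b h) (hlast h)))"
    by (simp add: agree_on_hists_upto[OF assms(1)])
qed

lemma fut_term_cong:
  assumes "\<forall>h'\<in>hists_upto T. a h' = b h'" "hlen h + n \<le> T"
  shows "fut_term f a h n = fut_term f b h n"
  unfolding fut_term_def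
proof (intro sum.cong refl)
  fix c :: "'s list"
  assume "c \<in> {c. length c = n}"
  then have "hlen (hext h c) \<le> T" using assms(2) by simp
  then show "trans_prob tp (hlast h) c * f (state a (hext h c)) (a (hext h c)) (hlast (hext h c))
      = trans_prob tp (hlast h) c * f (state b (hext h c)) (b (hext h c)) (hlast (hext h c))"
    by (simp add: agree_on_hists_upto[OF assms(1)])
qed

lemma cylinder_approximable_Jval: "cylinder_approximable J"
  unfolding cylinder_approximable_def
proof (intro allI impI)
  fix e :: real
  assume "e > 0"
  then obtain T where T: "payoff_bound * \<beta> ^ T / (1 - \<beta>) \<le> e"
    using geometric_tail_le[OF less_imp_le[OF \<beta>(1)] \<beta>(2)] by blast
  have "depends_upto T (\<lambda>a. \<Sum>t<T. \<beta> ^ t * period_payoff t a)"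
    unfolding depends_upto_def by (auto intro!: sum.cong period_payoff_cong)
  moreover have "\<bar>J a - (\<Sum>t<T. \<beta> ^ t * period_payoff t a)\<bar> \<le> e" if "a \<in> plans" for a
    using Jval_bounds(3)[OF that, of T] T by linarith
  ultimately show "\<exists>T G. depends_upto T G \<and> (\<forall>a\<in>plans. \<bar>J a - G a\<bar> \<le> e)"
    by blast
qed

definition constraint_slack :: "nat \<Rightarrow> 's hist \<Rightarrow> (real^'n) list \<Rightarrow> ('s hist \<Rightarrow> real^'n) \<Rightarrow> real" where
  "constraint_slack i h as a =
     (if plan_acts a h = as then 1 else 0) * (fut tp \<beta> \<zeta> x0 a (g i) h - gbar i)"

definition slack_bound :: real where
  "slack_bound = Bg / (1 - \<beta>) + (\<Sum>i<I. \<bar>gbar i\<bar>)"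

lemma slack_bound_nonneg: "0 \<le> slack_bound"
  unfolding slack_bound_def using Bg_nonneg \<beta> by (simp add: sum_nonneg)

lemma abs_constraint_slack_le:
  assumes "a \<in> plans" "i < I"
  shows "\<bar>constraint_slack i h as a\<bar> \<le> slack_bound"
proof -
  have "\<bar>fut tp \<beta> \<zeta> x0 a (g i) h\<bar> \<le> Bg / (1 - \<beta>)"
    using fut_bounds(1)[OF assms(1), of "g i" Bg] g_bound assms(2) by blast
  moreover have "\<bar>gbar i\<bar> \<le> (\<Sum>i<I. \<bar>gbar i\<bar>)"
    by (rule member_le_sum) (use assms in auto)
  ultimately show ?thesis unfolding constraint_slack_def slack_bound_def by auto
qed

lemma cylinder_approximable_constraint_slack:
  assumes i: "i < I"
  shows "cylinder_approximable (constraint_slack i h as)"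
  unfolding cylinder_approximable_def
proof (intro allI impI)
  fix e :: real
  assume "e > 0"
  then obtain N where N: "Bg * \<beta> ^ N / (1 - \<beta>) \<le> e"
    using geometric_tail_le[OF less_imp_le[OF \<beta>(1)] \<beta>(2)] by blast
  define G where "G a = (if plan_acts a h = as then 1 else 0) *
    ((\<Sum>n<N. \<beta> ^ n * fut_term (g i) a h n) - gbar i)" for a
  have "depends_upto (hlen h + N) G"
    unfolding depends_upto_def
  proof (intro ballI impI)
    fix a b :: "'s hist \<Rightarrow> real^'n"
    assume agree: "\<forall>h'\<in>hists_upto (hlen h + N). a h' = b h'"
    have "fut_term (g i) a h n = fut_term (g i) b h n" if "n < N" for n
      using agree that by (intro fut_term_cong) auto
    moreover have "plan_acts a h = plan_acts b h"
      by (rule agree_on_hists_upto(3)[OF agree]) simp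
    ultimately show "G a = G b" unfolding G_def by simp
  qed
  moreover have "\<bar>constraint_slack i h as a - G a\<bar> \<le> e" if "a \<in> plans" for a
  proof -
    have "\<bar>fut tp \<beta> \<zeta> x0 a (g i) h - (\<Sum>n<N. \<beta> ^ n * fut_term (g i) a h n)\<bar> \<le> e"
      using fut_bounds(2)[OF that, of "g i" Bg h N] g_bound[OF i] N by fastforce
    then show ?thesis unfolding constraint_slack_def G_def using \<open>e > 0\<close> by simp
  qed
  ultimately show "\<exists>T G. depends_upto T G \<and> (\<forall>a\<in>plans. \<bar>constraint_slack i h as a - G a\<bar> \<le> e)"
    by blast
qed

abbreviation "M_all \<equiv> Pi\<^sub>M UNIV (\<lambda>_::'s hist. (borel :: (real^'n) measure))"
abbreviation "M_plans \<equiv> restrict_space M_all plans"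

lemma space_M_plans: "space M_plans = plans"
  by (simp add: space_restrict_space space_PiM)

lemma sets_M_plans: "sets M_plans = sets (restrict_space borel plans)"
  by (rule sets_restrict_space_cong) (rule sets_PiM_equal_borel)

definition prefixes :: "nat \<Rightarrow> ('s hist \<Rightarrow> real^'n) set" where
  "prefixes T = (\<lambda>a. restrict a (hists_upto T)) ` plans"

definition cylinder :: "nat \<Rightarrow> ('s hist \<Rightarrow> real^'n) \<Rightarrow> ('s hist \<Rightarrow> real^'n) set" where
  "cylinder T v = {a. \<forall>h\<in>hists_upto T. a h = v h}"

definition extension :: "nat \<Rightarrow> ('s hist \<Rightarrow> real^'n) \<Rightarrow> ('s hist \<Rightarrow> real^'n)" where
  "extension T v = (SOME a. a \<in> plans \<and> restrict a (hists_upto T) = v)"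

lemma restrict_in_prefixes: "a \<in> plans \<Longrightarrow> restrict a (hists_upto T) \<in> prefixes T"
  unfolding prefixes_def by blast

lemma prefixes_subset_PiE: "prefixes T \<subseteq> PiE (hists_upto T) (\<lambda>_. A)"
  unfolding prefixes_def by (auto simp: plan_in_A)

lemma finite_prefixes: "finite (prefixes T)"
  by (rule finite_subset[OF prefixes_subset_PiE]) (intro finite_PiE finite_hists_upto A_fin)

lemma extension:
  assumes "v \<in> prefixes T"
  shows "extension T v \<in> plans" "restrict (extension T v) (hists_upto T) = v"
proof -
  have "\<exists>a. a \<in> plans \<and> restrict a (hists_upto T) = v" using assms unfolding prefixes_def by blast
  from someI_ex[OF this] show "extension T v \<in> plans" "restrict (extension T v) (hists_upto T) = v"
    unfolding extension_def by auto
qed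

lemma mem_cylinder_iff: "v \<in> prefixes T \<Longrightarrow> a \<in> cylinder T v \<longleftrightarrow> restrict a (hists_upto T) = v"
  using prefixes_subset_PiE[of T] unfolding cylinder_def
  by (auto simp: restrict_def PiE_def extensional_def fun_eq_iff)

lemma depends_upto_eq_sum:
  assumes G: "depends_upto T G" and a: "a \<in> plans"
  shows "G a = (\<Sum>v\<in>prefixes T. G (extension T v) * indicator (cylinder T v) a)"
proof -
  define v0 where "v0 = restrict a (hists_upto T)"
  have v0: "v0 \<in> prefixes T" unfolding v0_def using a by (rule restrict_in_prefixes)
  have "(\<Sum>v\<in>prefixes T. G (extension T v) * indicator (cylinder T v) a) = G (extension T v0)"
    using v0 mem_cylinder_iff[of _ T a] finite_prefixes
    by (simp add: indicator_def v0_def if_distrib sum.delta' cong: if_cong)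
  also have "\<dots> = G a"
    using G extension[OF v0] a unfolding depends_upto_def v0_def by (metis restrict_apply')
  finally show ?thesis by simp
qed

lemma cylinder_in_sets: "cylinder T v \<in> sets M_all"
proof -
  have "cylinder T v = {a \<in> space M_all. \<forall>h\<in>hists_upto T. a h = v h}"
    by (auto simp: cylinder_def space_PiM)
  also have "\<dots> \<in> sets M_all" using finite_hists_upto[of T] by measurable
  finally show ?thesis .
qed

lemma borel_measurable_depends_upto:
  assumes "depends_upto T G"
  shows "G \<in> borel_measurable M_plans"
proof -
  have "(\<lambda>a. \<Sum>v\<in>prefixes T. G (extension T v) * indicator (cylinder T v) a) \<in> borel_measurable M_plans"
    by (intro borel_measurable_sum borel_measurable_times borel_measurable_const
        measurable_restrict_space1 borel_measurable_indicator cylinder_in_sets)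
  then show ?thesis
    by (rule measurable_cong[THEN iffD1, rotated]) (use depends_upto_eq_sum[OF assms] space_M_plans in auto)
qed

lemma borel_measurable_cylinder_approximable:
  assumes "cylinder_approximable F"
  shows "F \<in> borel_measurable M_plans"
proof -
  have "\<forall>n. \<exists>T G. depends_upto T G \<and> (\<forall>a\<in>plans. \<bar>F a - G a\<bar> \<le> inverse (real (Suc n)))"
    using assms unfolding cylinder_approximable_def by simp
  then obtain T G where TG: "\<And>n. depends_upto (T n) (G n)"
    "\<And>n a. a \<in> plans \<Longrightarrow> \<bar>F a - G n a\<bar> \<le> inverse (real (Suc n))"
    by metis
  show ?thesis
  proof (rule borel_measurable_LIMSEQ_real)
    fix a
    assume "a \<in> space M_plans"
    then have "\<bar>G n a - F a\<bar> \<le> inverse (real (Suc n))" for n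
      using TG(2) by (simp add: space_M_plans abs_minus_commute)
    then have "(\<lambda>n. G n a - F a) \<longlonglongrightarrow> 0"
      by (intro Lim_null_comparison[OF _ LIMSEQ_inverse_real_of_nat]) auto
    then show "(\<lambda>n. G n a) \<longlonglongrightarrow> F a" by (simp add: LIM_zero_iff)
  next
    show "G n \<in> borel_measurable M_plans" for n by (rule borel_measurable_depends_upto[OF TG(1)])
  qed
qed

lemma integrable_cylinder_approximable:
  assumes P: "prob_space P" "sets P = sets M_plans"
    and F: "cylinder_approximable F" "\<And>a. a \<in> plans \<Longrightarrow> \<bar>F a\<bar> \<le> B"
  shows "integrable P F"
proof -
  interpret prob_space P by (rule P(1))
  have "F \<in> borel_measurable P"
    unfolding measurable_cong_sets[OF P(2) refl] by (rule borel_measurable_cylinder_approximable[OF F(1)])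
  moreover have "space P = plans" using sets_eq_imp_space_eq[OF P(2)] space_M_plans by simp
  ultimately show ?thesis by (intro integrable_const_bound[of _ B]) (use F(2) in auto)
qed

section \<open>The Lagrangian and weak duality\<close>

definition action_lists :: "nat \<Rightarrow> (real^'n) list set" where
  "action_lists t = {as. length as = t \<and> set as \<subseteq> A}"

lemma finite_action_lists: "finite (action_lists t)"
  unfolding action_lists_def using finite_lists_length_eq[OF A_fin, of t] by (simp add: conj_commute)

lemma preH_eq: "preH A t = shock_hists t \<times> action_lists t"
  by (auto simp: preH_def shock_hists_def action_lists_def)

lemma plan_acts_in_action_lists: "a \<in> plans \<Longrightarrow> plan_acts a h \<in> action_lists (hlen h)"
  unfolding action_lists_def plan_acts_def by (auto intro: plan_in_A)

definition penalty_term :: "(nat \<Rightarrow> ('s hist \<times> (real^'n) list) \<Rightarrow> real) \<Rightarrow> nat \<Rightarrow> ('s hist \<Rightarrow> real^'n) \<Rightarrow> real" where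
  "penalty_term lam t a = (\<Sum>h\<in>shock_hists t. \<Sum>as\<in>action_lists t. \<Sum>i<I.
     \<beta> ^ t * pit tp s0 h * lam i (h, as) * constraint_slack i h as a)"

definition multiplier_mass :: "(nat \<Rightarrow> ('s hist \<times> (real^'n) list) \<Rightarrow> real) \<Rightarrow> nat \<Rightarrow> real" where
  "multiplier_mass lam t = (\<Sum>hh\<in>preH A t. \<Sum>i<I. \<beta> ^ t * lam i hh * pit tp s0 (fst hh))"

lemma Lambda_iff:
  "lam \<in> Lambda tp \<beta> A I s0 \<longleftrightarrow> (\<forall>i hh. 0 \<le> lam i hh) \<and> summable (multiplier_mass lam)"
  unfolding Lambda_def multiplier_mass_def by simp

lemma sum_constraint_slack:
  assumes "a \<in> plans" "h \<in> shock_hists t"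
  shows "(\<Sum>as\<in>action_lists t. \<Sum>i<I. c i (h, as) * constraint_slack i h as a)
    = (\<Sum>i<I. c i (h, plan_acts a h) * (fut tp \<beta> \<zeta> x0 a (g i) h - gbar i))"
proof -
  have "plan_acts a h \<in> action_lists t"
    using plan_acts_in_action_lists[OF assms(1), of h] assms(2) by (simp add: shock_hists_def)
  have "(\<Sum>as\<in>action_lists t. \<Sum>i<I. c i (h, as) * constraint_slack i h as a)
    = (\<Sum>i<I. \<Sum>as\<in>action_lists t. if plan_acts a h = as
        then c i (h, as) * (fut tp \<beta> \<zeta> x0 a (g i) h - gbar i) else 0)"
    by (subst sum.swap) (auto simp: constraint_slack_def intro!: sum.cong)
  with \<open>plan_acts a h \<in> action_lists t\<close> show ?thesis
    by (simp add: sum.delta finite_action_lists)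
qed

lemma Lag_term_eq:
  assumes "a \<in> plans"
  shows "\<beta> ^ t * (\<Sum>h\<in>shock_hists t. pit tp s0 h *
      (r (state a h) (a h) (hlast h) + (\<Sum>i<I. \<gamma> i * g i (state a h) (a h) (hlast h))
       + (\<Sum>i<I. lam i (h, plan_acts a h) * (fut tp \<beta> \<zeta> x0 a (g i) h - gbar i))))
    = \<beta> ^ t * period_payoff t a + penalty_term lam t a"
proof -
  have "penalty_term lam t a = (\<Sum>h\<in>shock_hists t. \<beta> ^ t * (pit tp s0 h *
      (\<Sum>i<I. lam i (h, plan_acts a h) * (fut tp \<beta> \<zeta> x0 a (g i) h - gbar i))))"
    unfolding penalty_term_def
  proof (rule sum.cong[OF refl])
    fix h :: "'s hist"
    assume h: "h \<in> shock_hists t"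
    show "(\<Sum>as\<in>action_lists t. \<Sum>i<I. \<beta> ^ t * pit tp s0 h * lam i (h, as) * constraint_slack i h as a)
      = \<beta> ^ t * (pit tp s0 h * (\<Sum>i<I. lam i (h, plan_acts a h) * (fut tp \<beta> \<zeta> x0 a (g i) h - gbar i)))"
      using sum_constraint_slack[OF assms h, of "\<lambda>i hh. \<beta> ^ t * pit tp s0 h * lam i hh"]
      by (simp add: sum_distrib_left mult_ac)
  qed
  then show ?thesis
    unfolding period_payoff_def by (simp add: distrib_left sum.distrib sum_distrib_left)
qed

lemma abs_penalty_term_le:
  assumes a: "a \<in> plans" and nonneg: "\<And>i hh. 0 \<le> lam i hh"
  shows "\<bar>penalty_term lam t a\<bar> \<le> slack_bound * multiplier_mass lam t"
proof -
  have "\<bar>penalty_term lam t a\<bar> \<le> (\<Sum>h\<in>shock_hists t. \<Sum>as\<in>action_lists t. \<Sum>i<I.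
      \<bar>\<beta> ^ t * pit tp s0 h * lam i (h, as) * constraint_slack i h as a\<bar>)"
    unfolding penalty_term_def
    by (rule order.trans[OF sum_abs sum_mono], rule order.trans[OF sum_abs sum_mono], rule sum_abs)
  also have "\<dots> \<le> (\<Sum>h\<in>shock_hists t. \<Sum>as\<in>action_lists t. \<Sum>i<I.
      slack_bound * (\<beta> ^ t * lam i (h, as) * pit tp s0 h))"
  proof (intro sum_mono)
    fix h as i
    assume "i \<in> {..<I}"
    then have "\<bar>constraint_slack i h as a\<bar> \<le> slack_bound"
      using abs_constraint_slack_le[OF a] by simp
    moreover have weight: "0 \<le> \<beta> ^ t * pit tp s0 h * lam i (h, as)"
      using \<beta> nonneg pit_nonneg by simp
    ultimately have "(\<beta> ^ t * pit tp s0 h * lam i (h, as)) * \<bar>constraint_slack i h as a\<bar>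
        \<le> (\<beta> ^ t * pit tp s0 h * lam i (h, as)) * slack_bound"
      by (rule mult_left_mono)
    moreover have "\<bar>\<beta> ^ t * pit tp s0 h * lam i (h, as) * constraint_slack i h as a\<bar>
        = (\<beta> ^ t * pit tp s0 h * lam i (h, as)) * \<bar>constraint_slack i h as a\<bar>"
      by (simp only: abs_mult[of _ "constraint_slack i h as a"] abs_of_nonneg[OF weight])
    ultimately show "\<bar>\<beta> ^ t * pit tp s0 h * lam i (h, as) * constraint_slack i h as a\<bar>
        \<le> slack_bound * (\<beta> ^ t * lam i (h, as) * pit tp s0 h)"
      by (simp add: mult_ac)
  qed
  also have "\<dots> = slack_bound * multiplier_mass lam t"
  proof -
    have split: "(\<Sum>hh\<in>S \<times> B. f hh) = (\<Sum>h\<in>S. \<Sum>b\<in>B. f (h, b))" for S B and f :: "_ \<Rightarrow> real"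
      by (simp add: sum.cartesian_product)
    show ?thesis unfolding multiplier_mass_def preH_eq split by (simp add: sum_distrib_left)
  qed
  finally show ?thesis .
qed

lemma summable_penalty_term:
  assumes "a \<in> plans" "lam \<in> Lambda tp \<beta> A I s0"
  shows "summable (\<lambda>t. penalty_term lam t a)"
proof (rule summable_comparison_test'[of "\<lambda>t. slack_bound * multiplier_mass lam t" 0])
  show "summable (\<lambda>t. slack_bound * multiplier_mass lam t)"
    using assms(2) by (simp add: Lambda_iff summable_mult)
  have "\<And>i hh. 0 \<le> lam i hh" using assms(2) unfolding Lambda_iff by blast
  then show "norm (penalty_term lam t a) \<le> slack_bound * multiplier_mass lam t" for t
    using abs_penalty_term_le[OF assms(1)] by simp
qed

lemma Lag_eq_Jval_plus_penalty:
  assumes "a \<in> plans" "lam \<in> Lambda tp \<beta> A I s0"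
  shows "Lag tp \<beta> \<zeta> r I g gbar \<gamma> x0 s0 a lam = J a + (\<Sum>t. penalty_term lam t a)"
  unfolding Lag_def Lag_term_eq[OF assms(1)] Jval_def period_payoff_def[symmetric]
  by (rule suminf_add[symmetric, OF Jval_bounds(1)[OF assms(1)] summable_penalty_term[OF assms]])

abbreviation "feasible_lottery P \<equiv> lottery_feasible tp \<beta> A p \<zeta> I g gbar x0 s0 P"

lemma lottery_feasibleD:
  assumes "feasible_lottery P"
  shows "prob_space P" "sets P = sets M_plans" "space P = plans"
proof -
  show "prob_space P" using assms by (simp add: lottery_feasible_def)
  show sets: "sets P = sets M_plans" using assms by (simp add: lottery_feasible_def sets_M_plans)
  show "space P = plans" using sets_eq_imp_space_eq[OF sets] space_M_plans by simp
qed

lemma integrable_constraint_slack: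
  assumes "feasible_lottery P" "i < I"
  shows "integrable P (constraint_slack i h as)"
  using lottery_feasibleD(1,2)[OF assms(1)] cylinder_approximable_constraint_slack[OF assms(2)]
    abs_constraint_slack_le[OF _ assms(2)]
  by (rule integrable_cylinder_approximable)

lemma integral_constraint_slack_nonneg:
  assumes "feasible_lottery P" "fst h = s0" "as \<in> action_lists (hlen h)" "i < I"
  shows "0 \<le> (\<integral>a. constraint_slack i h as a \<partial>P)"
proof -
  have "(h, as) \<in> preH A (hlen h)" using assms(3) by (simp add: preH_eq shock_hists_def)
  then show ?thesis using assms unfolding lottery_feasible_def constraint_slack_def by fast
qed

lemma integral_penalty_term_nonneg:
  assumes lf: "feasible_lottery P" and nonneg: "\<And>i hh. 0 \<le> lam i hh"
  shows "integrable P (penalty_term lam t)" "0 \<le> integral\<^sup>L P (penalty_term lam t)"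
proof -
  note int = integrable_constraint_slack[OF lf]
  show "integrable P (penalty_term lam t)"
    unfolding penalty_term_def by (intro Bochner_Integration.integrable_sum integrable_mult_right) (auto intro: int)
  define C where "C h as i = \<beta> ^ t * pit tp s0 h * lam i (h, as)" for h as i
  have int_i: "integrable P (\<lambda>a. \<Sum>i<I. C h as i * constraint_slack i h as a)" for h as
    by (intro Bochner_Integration.integrable_sum integrable_mult_right) (auto intro: int)
  have int_as: "integrable P (\<lambda>a. \<Sum>as\<in>action_lists t. \<Sum>i<I. C h as i * constraint_slack i h as a)" for h
    by (intro Bochner_Integration.integrable_sum int_i)
  have "integral\<^sup>L P (penalty_term lam t) = (\<Sum>h\<in>shock_hists t. \<Sum>as\<in>action_lists t. \<Sum>i<I.
      C h as i * (\<integral>a. constraint_slack i h as a \<partial>P))"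
    unfolding penalty_term_def C_def[symmetric]
    by (simp add: Bochner_Integration.integral_sum int_as int_i int)
  also have "\<dots> = (\<Sum>h\<in>shock_hists t. \<Sum>as\<in>action_lists t. \<Sum>i<I.
      \<beta> ^ t * pit tp s0 h * lam i (h, as) * (\<integral>a. constraint_slack i h as a \<partial>P))"
    by (simp add: C_def)
  also have "\<dots> \<ge> 0"
  proof (intro sum_nonneg)
    fix h :: "'s hist" and as i
    assume hyps: "h \<in> shock_hists t" "as \<in> action_lists t" "i \<in> {..<I}"
    show "0 \<le> \<beta> ^ t * pit tp s0 h * lam i (h, as) * (\<integral>a. constraint_slack i h as a \<partial>P)"
    proof (cases "fst h = s0")
      case True
      with hyps have "0 \<le> (\<integral>a. constraint_slack i h as a \<partial>P)"
        by (intro integral_constraint_slack_nonneg[OF lf]) (auto simp: shock_hists_def)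
      then show ?thesis using \<beta> nonneg pit_nonneg by (intro mult_nonneg_nonneg) auto
    next
      case False
      then show ?thesis by (simp add: pit_def)
    qed
  qed
  finally show "0 \<le> integral\<^sup>L P (penalty_term lam t)" .
qed

lemma integral_penalty_nonneg:
  assumes lf: "feasible_lottery P" and lam: "lam \<in> Lambda tp \<beta> A I s0"
  shows "integrable P (\<lambda>a. \<Sum>t. penalty_term lam t a)" "0 \<le> (\<integral>a. (\<Sum>t. penalty_term lam t a) \<partial>P)"
proof -
  interpret prob_space P using lottery_feasibleD(1)[OF lf] .
  have nonneg: "\<And>i hh. 0 \<le> lam i hh" and summable: "summable (\<lambda>t. slack_bound * multiplier_mass lam t)"
    using lam by (auto simp: Lambda_iff intro: summable_mult)
  note pen_t = integral_penalty_term_nonneg[OF lf nonneg]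
  have bound: "norm (penalty_term lam t a) \<le> slack_bound * multiplier_mass lam t" if "a \<in> space P" for t a
    using abs_penalty_term_le[OF _ nonneg] that lottery_feasibleD(3)[OF lf] by simp
  have AE: "AE a in P. summable (\<lambda>t. norm (penalty_term lam t a))"
    using bound by (intro AE_I2 summable_comparison_test'[OF summable, of 0]) auto
  have int_norm: "(\<integral>a. norm (penalty_term lam t a) \<partial>P) \<le> slack_bound * multiplier_mass lam t" for t
    using integral_mono[of P _ "\<lambda>_. slack_bound * multiplier_mass lam t"] pen_t(1) bound by (simp add: prob_space)
  have summable_int: "summable (\<lambda>t. \<integral>a. norm (penalty_term lam t a) \<partial>P)"
    using int_norm by (intro summable_comparison_test'[OF summable, of 0]) auto
  show "integrable P (\<lambda>a. \<Sum>t. penalty_term lam t a)"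
    by (rule integrable_suminf[OF pen_t(1) AE summable_int])
  have "(\<integral>a. (\<Sum>t. penalty_term lam t a) \<partial>P) = (\<Sum>t. integral\<^sup>L P (penalty_term lam t))"
    by (rule integral_suminf[OF pen_t(1) AE summable_int])
  moreover have "summable (\<lambda>t. integral\<^sup>L P (penalty_term lam t))"
  proof (rule summable_comparison_test'[OF summable, of 0])
    show "norm (integral\<^sup>L P (penalty_term lam t)) \<le> slack_bound * multiplier_mass lam t" for t
      using integral_norm_bound[of P "penalty_term lam t"] int_norm[of t] by linarith
  qed
  ultimately show "0 \<le> (\<integral>a. (\<Sum>t. penalty_term lam t a) \<partial>P)"
    by (simp add: suminf_nonneg pen_t(2))
qed

lemma weak_duality:
  assumes lf: "feasible_lottery P" and lam: "lam \<in> Lambda tp \<beta> A I s0"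
  shows "ereal (\<integral>a. J a \<partial>P) \<le> (SUP a\<in>plans. ereal (Lag tp \<beta> \<zeta> r I g gbar \<gamma> x0 s0 a lam))"
proof -
  note P = lottery_feasibleD[OF lf]
  note penalty = integral_penalty_nonneg[OF lf lam]
  have J: "integrable P J"
    by (rule integrable_cylinder_approximable[OF P(1,2) cylinder_approximable_Jval Jval_bounds(2)])
  have Lag_eq: "Lag tp \<beta> \<zeta> r I g gbar \<gamma> x0 s0 a lam = J a + (\<Sum>t. penalty_term lam t a)"
    if "a \<in> space P" for a
    using Lag_eq_Jval_plus_penalty[OF _ lam] that P(3) by simp
  have Lag: "integrable P (\<lambda>a. Lag tp \<beta> \<zeta> r I g gbar \<gamma> x0 s0 a lam)"
    by (subst Bochner_Integration.integrable_cong[OF refl Lag_eq])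
       (auto intro: Bochner_Integration.integrable_add[OF J penalty(1)])
  have "(\<integral>a. J a \<partial>P) \<le> (\<integral>a. J a \<partial>P) + (\<integral>a. (\<Sum>t. penalty_term lam t a) \<partial>P)"
    using penalty(2) by simp
  also have "\<dots> = (\<integral>a. J a + (\<Sum>t. penalty_term lam t a) \<partial>P)"
    by (rule Bochner_Integration.integral_add[OF J penalty(1), symmetric])
  also have "\<dots> = (\<integral>a. Lag tp \<beta> \<zeta> r I g gbar \<gamma> x0 s0 a lam \<partial>P)"
    by (rule Bochner_Integration.integral_cong[OF refl]) (simp add: Lag_eq)
  finally have "ereal (\<integral>a. J a \<partial>P) \<le> ereal (\<integral>a. Lag tp \<beta> \<zeta> r I g gbar \<gamma> x0 s0 a lam \<partial>P)"
    by simp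
  also have "\<dots> \<le> (SUP a\<in>plans. ereal (Lag tp \<beta> \<zeta> r I g gbar \<gamma> x0 s0 a lam))"
    using integral_le_SUP[OF P(1) Lag] P(3) by simp
  finally show ?thesis .
qed

lemma Vval_le_Dval: "Vval tp \<beta> A p \<zeta> r I g gbar \<gamma> x0 s0 \<le> Dval tp \<beta> A p \<zeta> r I g gbar \<gamma> x0 s0"
  unfolding Vval_def Dval_def Jval_def[symmetric]
  by (intro SUP_least INF_greatest weak_duality) auto

section \<open>Finite mixtures of plans\<close>

definition constraint_index :: "nat \<Rightarrow> ('s hist \<times> (real^'n) list \<times> nat) set" where
  "constraint_index T = (SIGMA h:hists_upto T. SIGMA as:action_lists (hlen h). {..<I})"

lemma finite_constraint_index: "finite (constraint_index T)"
  unfolding constraint_index_def by (intro finite_SigmaI finite_hists_upto finite_action_lists) auto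

lemma sum_constraint_index:
  "(\<Sum>k\<in>constraint_index T. f k) = (\<Sum>h\<in>hists_upto T. \<Sum>as\<in>action_lists (hlen h). \<Sum>i<I. f (h, as, i))"
  unfolding constraint_index_def by (simp add: sum.Sigma finite_hists_upto finite_action_lists)

text \<open>Dividing the weight of constraint \<open>Some k\<close> by the objective weight \<open>\<mu> None\<close>, the discount
  factor and the probability of the history turns it into a multiplier.\<close>

definition finite_multiplier ::
    "nat \<Rightarrow> (('s hist \<times> (real^'n) list \<times> nat) option \<Rightarrow> real) \<Rightarrow> nat \<Rightarrow> 's hist \<times> (real^'n) list \<Rightarrow> real" where
  "finite_multiplier T \<mu> i = (\<lambda>(h, as). if fst h = s0 \<and> (h, as, i) \<in> constraint_index T
     then \<mu> (Some (h, as, i)) / (\<mu> None * \<beta> ^ hlen h * pit tp s0 h) else 0)"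

definition hedge_payoff :: "real \<Rightarrow> ('s hist \<times> (real^'n) list \<times> nat) option \<Rightarrow> ('s hist \<Rightarrow> real^'n) \<Rightarrow> real" where
  "hedge_payoff c k a = (case k of None \<Rightarrow> J a - c
     | Some (h, as, i) \<Rightarrow> if fst h = s0 then constraint_slack i h as a else 0)"

lemma finite_multiplier_in_Lambda:
  assumes pos: "\<mu> None > 0" and nonneg: "\<And>k. k \<in> constraint_index T \<Longrightarrow> \<mu> (Some k) \<ge> 0"
  shows "finite_multiplier T \<mu> \<in> Lambda tp \<beta> A I s0"
proof -
  have "0 \<le> finite_multiplier T \<mu> i (h, as)" for i h as
  proof (cases "fst h = s0 \<and> (h, as, i) \<in> constraint_index T")
    case True
    then have "0 < \<mu> None * \<beta> ^ hlen h * pit tp s0 h" using pos \<beta> pit_pos by simp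
    with True show ?thesis using nonneg by (simp add: finite_multiplier_def)
  next
    case False
    then show ?thesis by (auto simp: finite_multiplier_def)
  qed
  then have "\<forall>i hh. 0 \<le> finite_multiplier T \<mu> i hh" by (simp add: split_paired_all)
  moreover have "summable (multiplier_mass (finite_multiplier T \<mu>))"
  proof (rule summable_finite[of "{..T}"])
    fix t
    assume "t \<notin> {..T}"
    then have "finite_multiplier T \<mu> i hh = 0" if "hh \<in> preH A t" for i hh
      using that by (auto simp: finite_multiplier_def constraint_index_def hists_upto_def preH_def)
    then show "multiplier_mass (finite_multiplier T \<mu>) t = 0" by (simp add: multiplier_mass_def)
  qed simp
  ultimately show ?thesis unfolding Lambda_iff by blast
qed

lemma penalty_finite_multiplier:
  assumes a: "a \<in> plans" and pos: "\<mu> None > 0"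
  shows "(\<Sum>t. penalty_term (finite_multiplier T \<mu>) t a)
    = (\<Sum>k\<in>constraint_index T. \<mu> (Some k) / \<mu> None * hedge_payoff c (Some k) a)"
proof -
  let ?lam = "finite_multiplier T \<mu>"
  have "penalty_term ?lam t a = 0" if "t > T" for t
    using that by (auto simp: penalty_term_def finite_multiplier_def constraint_index_def
        hists_upto_def shock_hists_def intro!: sum.neutral)
  then have "(\<Sum>t. penalty_term ?lam t a) = (\<Sum>t\<le>T. penalty_term ?lam t a)"
    by (intro suminf_finite) auto
  also have "\<dots> = (\<Sum>h\<in>hists_upto T. \<Sum>as\<in>action_lists (hlen h). \<Sum>i<I.
      \<beta> ^ hlen h * pit tp s0 h * ?lam i (h, as) * constraint_slack i h as a)"
    unfolding sum_hists_upto penalty_term_def by (intro sum.cong refl) (auto simp: shock_hists_def)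
  also have "\<dots> = (\<Sum>k\<in>constraint_index T. \<mu> (Some k) / \<mu> None * hedge_payoff c (Some k) a)"
    unfolding sum_constraint_index
  proof (intro sum.cong refl)
    fix h :: "'s hist" and as i
    assume "h \<in> hists_upto T" "as \<in> action_lists (hlen h)" "i \<in> {..<I}"
    then have "(h, as, i) \<in> constraint_index T" by (simp add: constraint_index_def)
    then show "\<beta> ^ hlen h * pit tp s0 h * ?lam i (h, as) * constraint_slack i h as a
        = \<mu> (Some (h, as, i)) / \<mu> None * hedge_payoff c (Some (h, as, i)) a"
      using pos pit_pos[of h] \<beta>
      by (cases "fst h = s0") (simp_all add: finite_multiplier_def hedge_payoff_def field_simps)
  qed
  finally show ?thesis .
qed

definition hedge_index :: "nat \<Rightarrow> ('s hist \<times> (real^'n) list \<times> nat) option set" where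
  "hedge_index T = insert None (Some ` constraint_index T)"

lemma finite_hedge_index: "finite (hedge_index T)"
  by (simp add: hedge_index_def finite_constraint_index)

lemma sum_hedge_index:
  "(\<Sum>k\<in>hedge_index T. f k) = f None + (\<Sum>k\<in>constraint_index T. f (Some k))"
  by (simp add: hedge_index_def finite_constraint_index sum.reindex)

lemma abs_hedge_payoff_le:
  assumes "k \<in> hedge_index T" "a \<in> plans"
  shows "\<bar>hedge_payoff c k a\<bar> \<le> payoff_bound / (1 - \<beta>) + \<bar>c\<bar> + slack_bound"
proof (cases k)
  case None
  then show ?thesis
    using Jval_bounds(2)[OF assms(2)] slack_bound_nonneg by (auto simp: hedge_payoff_def)
next
  case (Some k')
  then obtain h as i where k: "k = Some (h, as, i)" and "i < I"
    using assms(1) by (auto simp: hedge_index_def constraint_index_def)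
  then have "\<bar>hedge_payoff c k a\<bar> \<le> slack_bound"
    using abs_constraint_slack_le[OF assms(2)] slack_bound_nonneg by (simp add: hedge_payoff_def)
  moreover have "0 \<le> payoff_bound / (1 - \<beta>)" using payoff_bound_nonneg \<beta> by simp
  ultimately show ?thesis by linarith
qed

lemma hedge_response:
  assumes c: "ereal c < Dval tp \<beta> A p \<zeta> r I g gbar \<gamma> x0 s0"
    and nonneg: "\<forall>k\<in>hedge_index T. 0 \<le> \<mu> k" and sum: "sum \<mu> (hedge_index T) = 1"
  shows "\<exists>a\<in>plans. 0 \<le> (\<Sum>k\<in>hedge_index T. \<mu> k * hedge_payoff c k a)"
proof (cases "\<mu> None > 0")
  case True
  let ?lam = "finite_multiplier T \<mu>"
  have lam: "?lam \<in> Lambda tp \<beta> A I s0"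
    by (rule finite_multiplier_in_Lambda[of \<mu> T, OF True]) (use nonneg in \<open>auto simp: hedge_index_def\<close>)
  then have "ereal c < (SUP a\<in>plans. ereal (Lag tp \<beta> \<zeta> r I g gbar \<gamma> x0 s0 a ?lam))"
    using c unfolding Dval_def by (rule less_INF_D[rotated])
  then obtain a where a: "a \<in> plans" and less: "c < Lag tp \<beta> \<zeta> r I g gbar \<gamma> x0 s0 a ?lam"
    by (auto simp: less_SUP_iff)
  have "0 < (J a - c) + (\<Sum>k\<in>constraint_index T. \<mu> (Some k) / \<mu> None * hedge_payoff c (Some k) a)"
    using less Lag_eq_Jval_plus_penalty[OF a lam] penalty_finite_multiplier[where T=T and c=c and \<mu>=\<mu>, OF a True] by simp
  then have "0 < \<mu> None * ((J a - c) + (\<Sum>k\<in>constraint_index T. \<mu> (Some k) / \<mu> None * hedge_payoff c (Some k) a))"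
    using True by simp
  also have "\<dots> = (\<Sum>k\<in>hedge_index T. \<mu> k * hedge_payoff c k a)"
    unfolding sum_hedge_index using True by (simp add: hedge_payoff_def distrib_left sum_distrib_left)
  finally show ?thesis using a by (intro bexI[of _ a]) auto
next
  case False
  then have zero: "\<mu> None = 0" using nonneg by (auto simp: hedge_index_def)
  obtain a where "feasible_plan tp \<beta> A p \<zeta> I g gbar x0 s0 a" using standing[OF x0] by blast
  then have a: "a \<in> plans" and fut: "\<And>h i. fst h = s0 \<Longrightarrow> i < I \<Longrightarrow> gbar i \<le> fut tp \<beta> \<zeta> x0 a (g i) h"
    unfolding feasible_plan_def by auto
  have "0 \<le> hedge_payoff c (Some k) a" if "k \<in> constraint_index T" for k
    using that fut by (auto simp: hedge_payoff_def constraint_index_def constraint_slack_def)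
  then have "0 \<le> (\<Sum>k\<in>hedge_index T. \<mu> k * hedge_payoff c k a)"
    unfolding sum_hedge_index zero using nonneg
    by (auto simp: hedge_index_def intro!: sum_nonneg mult_nonneg_nonneg)
  then show ?thesis using a by blast
qed

lemma finite_mixture_exists:
  assumes c: "ereal c < Dval tp \<beta> A p \<zeta> r I g gbar \<gamma> x0 s0" and e: "e > 0"
  obtains L where "L \<noteq> []" "set L \<subseteq> plans" "c - e \<le> list_avg L J"
    "\<And>h as i. h \<in> hists_upto T \<Longrightarrow> fst h = s0 \<Longrightarrow> as \<in> action_lists (hlen h) \<Longrightarrow> i < I \<Longrightarrow>
       - e \<le> list_avg L (constraint_slack i h as)"
proof -
  obtain L where L: "L \<noteq> []" "set L \<subseteq> plans"
    and regret: "\<And>k. k \<in> hedge_index T \<Longrightarrow> - e \<le> list_avg L (hedge_payoff c k)"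
  proof (rule multiplicative_weights[OF finite_hedge_index _ _ hedge_response[OF c] e, of T, THEN exE])
    show "hedge_index T \<noteq> {}" by (simp add: hedge_index_def)
    show "\<And>k a. k \<in> hedge_index T \<Longrightarrow> a \<in> plans \<Longrightarrow>
        \<bar>hedge_payoff c k a\<bar> \<le> payoff_bound / (1 - \<beta>) + \<bar>c\<bar> + slack_bound"
      by (rule abs_hedge_payoff_le)
  qed auto
  have "list_avg L (hedge_payoff c None) = list_avg L (\<lambda>a. J a - c)"
    by (rule list_avg_cong) (simp add: hedge_payoff_def)
  also have "\<dots> = list_avg L J - c"
    by (subst list_avg_diff) (simp add: list_avg_const[OF L(1)])
  finally have "list_avg L (hedge_payoff c None) = list_avg L J - c" .
  then have "c - e \<le> list_avg L J"
    using regret[of None] by (simp add: hedge_index_def)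
  moreover have "- e \<le> list_avg L (constraint_slack i h as)"
    if "h \<in> hists_upto T" "fst h = s0" "as \<in> action_lists (hlen h)" "i < I" for h as i
  proof -
    have "list_avg L (hedge_payoff c (Some (h, as, i))) = list_avg L (constraint_slack i h as)"
      using that(2) by (intro list_avg_cong) (simp add: hedge_payoff_def)
    then show ?thesis
      using regret[of "Some (h, as, i)"] that by (simp add: hedge_index_def constraint_index_def)
  qed
  ultimately show ?thesis using L that by blast
qed

end

section \<open>The limit lottery\<close>

locale mixture_sequence = lottery_duality tp A X \<zeta> p r I g gbar \<beta> \<gamma> x0 s0 Br Bg
  for tp :: "'s::finite \<Rightarrow> 's \<Rightarrow> real" and A :: "(real^'n) set" and X :: "(real^'m) set"
    and \<zeta> p r I g gbar \<beta> \<gamma> x0 s0 Br Bg +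
  fixes Ls :: "nat \<Rightarrow> ('s hist \<Rightarrow> real^'n) list"
  assumes Ls_nonempty: "\<And>N. Ls N \<noteq> []" and Ls_plans: "\<And>N. set (Ls N) \<subseteq> plans"
begin

definition empirical_prob :: "nat \<Rightarrow> nat \<Rightarrow> ('s hist \<Rightarrow> real^'n) \<Rightarrow> real" where
  "empirical_prob N T v = list_avg (Ls N) (\<lambda>a. if restrict a (hists_upto T) = v then 1 else 0)"

lemma empirical_prob_nonneg: "0 \<le> empirical_prob N T v"
  unfolding empirical_prob_def list_avg_def by (intro divide_nonneg_nonneg sum_list_nonneg) auto

lemma empirical_prob_le_1: "empirical_prob N T v \<le> 1"
proof -
  have "empirical_prob N T v \<le> list_avg (Ls N) (\<lambda>_. 1)"
    unfolding empirical_prob_def by (rule list_avg_mono) simp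
  then show ?thesis by (simp add: list_avg_const[OF Ls_nonempty])
qed

lemma sum_empirical_prob: "(\<Sum>v\<in>prefixes T. empirical_prob N T v) = 1"
proof -
  have "(\<Sum>v\<in>prefixes T. if restrict a (hists_upto T) = v then 1 else 0 :: real) = 1" if "a \<in> plans" for a
    using restrict_in_prefixes[OF that] by (simp add: finite_prefixes)
  then have "(\<Sum>v\<in>prefixes T. empirical_prob N T v) = list_avg (Ls N) (\<lambda>a. 1)"
    unfolding empirical_prob_def list_avg_sum[symmetric] using Ls_plans by (intro list_avg_cong) auto
  then show ?thesis by (simp add: list_avg_const[OF Ls_nonempty])
qed

lemma empirical_prob_consistent:
  assumes "T \<le> T'"
  shows "empirical_prob N T v = (\<Sum>v'\<in>{v'\<in>prefixes T'. restrict v' (hists_upto T) = v}. empirical_prob N T' v')"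
proof -
  have indicator_eq: "(if restrict a (hists_upto T) = v then 1 else 0 :: real)
      = (\<Sum>v'\<in>{v'\<in>prefixes T'. restrict v' (hists_upto T) = v}. if restrict a (hists_upto T') = v' then 1 else 0)"
    if "a \<in> plans" for a
    using restrict_in_prefixes[OF that, of T'] finite_prefixes
    by (simp add: hists_upto_Int[OF assms] sum.delta)
  then show ?thesis
    unfolding empirical_prob_def list_avg_sum[symmetric]
    by (intro list_avg_cong) (simp add: indicator_eq subsetD[OF Ls_plans])
qed

lemma list_avg_depends_upto:
  assumes "depends_upto T G"
  shows "list_avg (Ls N) G = (\<Sum>v\<in>prefixes T. G (extension T v) * empirical_prob N T v)"
proof -
  have "G a = (\<Sum>v\<in>prefixes T. G (extension T v) * (if restrict a (hists_upto T) = v then 1 else 0))"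
    if "a \<in> plans" for a
    unfolding depends_upto_eq_sum[OF assms that]
    by (intro sum.cong refl) (simp add: mem_cylinder_iff indicator_def)
  then show ?thesis
    unfolding empirical_prob_def list_avg_cmult[symmetric] list_avg_sum[symmetric]
    using Ls_plans by (intro list_avg_cong) auto
qed

definition subseq :: "nat \<Rightarrow> nat" where
  "subseq = (SOME s. strict_mono s \<and>
     (\<forall>(T, v)\<in>Sigma UNIV prefixes. convergent (\<lambda>k. empirical_prob (s k) T v)))"

lemma subseq: "strict_mono subseq" "v \<in> prefixes T \<Longrightarrow> convergent (\<lambda>k. empirical_prob (subseq k) T v)"
proof -
  have "countable (Sigma UNIV prefixes)"
    by (rule countable_SIGMA) (auto intro: countable_finite finite_prefixes)
  then have "\<exists>s. strict_mono s \<and> (\<forall>Tv\<in>Sigma UNIV prefixes. convergent (\<lambda>k. (case Tv of (T, v) \<Rightarrow> empirical_prob (s k) T v)))"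
    by (rule bounded_seq_convergent_subseq_on[where M=1])
       (auto simp: empirical_prob_nonneg empirical_prob_le_1 abs_le_iff intro: order.trans[OF _ empirical_prob_nonneg])
  from someI_ex[OF this[unfolded case_prod_beta]]
  show "strict_mono subseq" "v \<in> prefixes T \<Longrightarrow> convergent (\<lambda>k. empirical_prob (subseq k) T v)"
    unfolding subseq_def by (auto simp: case_prod_beta)
qed

definition limit_prob :: "nat \<Rightarrow> ('s hist \<Rightarrow> real^'n) \<Rightarrow> real" where
  "limit_prob T v = (if v \<in> prefixes T then lim (\<lambda>k. empirical_prob (subseq k) T v) else 0)"

lemma limit_prob_LIMSEQ: "v \<in> prefixes T \<Longrightarrow> (\<lambda>k. empirical_prob (subseq k) T v) \<longlonglongrightarrow> limit_prob T v"
  unfolding limit_prob_def using subseq(2) by (simp add: convergent_LIMSEQ_iff)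

lemma limit_prob_nonneg: "0 \<le> limit_prob T v"
  using limit_prob_LIMSEQ[THEN LIMSEQ_le_const] empirical_prob_nonneg by (auto simp: limit_prob_def)

lemma sum_limit_prob: "(\<Sum>v\<in>prefixes T. limit_prob T v) = 1"
proof -
  have "(\<lambda>k. \<Sum>v\<in>prefixes T. empirical_prob (subseq k) T v) \<longlonglongrightarrow> (\<Sum>v\<in>prefixes T. limit_prob T v)"
    by (intro tendsto_sum limit_prob_LIMSEQ)
  then show ?thesis by (simp add: sum_empirical_prob LIMSEQ_const_iff)
qed

lemma limit_prob_consistent:
  assumes "T \<le> T'"
  shows "limit_prob T v = (\<Sum>v'\<in>{v'\<in>prefixes T'. restrict v' (hists_upto T) = v}. limit_prob T' v')"
proof (cases "v \<in> prefixes T")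
  case True
  have "(\<lambda>k. empirical_prob (subseq k) T v) \<longlonglongrightarrow>
      (\<Sum>v'\<in>{v'\<in>prefixes T'. restrict v' (hists_upto T) = v}. limit_prob T' v')"
    unfolding empirical_prob_consistent[OF assms] by (intro tendsto_sum limit_prob_LIMSEQ) auto
  with limit_prob_LIMSEQ[OF True] show ?thesis by (rule LIMSEQ_unique)
next
  case False
  have empty: "{v'\<in>prefixes T'. restrict v' (hists_upto T) = v} = {}"
    using False by (auto simp: prefixes_def hists_upto_Int[OF assms])
  show ?thesis unfolding empty using False by (simp add: limit_prob_def)
qed

definition prefix_pmf :: "nat \<Rightarrow> ('s hist \<Rightarrow> real^'n) pmf" where
  "prefix_pmf T = embed_pmf (limit_prob T)"

lemma pmf_prefix_pmf: "pmf (prefix_pmf T) v = limit_prob T v"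
proof -
  have "(\<integral>\<^sup>+v. ennreal (limit_prob T v) \<partial>count_space UNIV) = (\<Sum>v\<in>prefixes T. ennreal (limit_prob T v))"
    by (rule nn_integral_count_space') (auto simp: finite_prefixes limit_prob_def)
  also have "\<dots> = 1" by (simp add: sum_ennreal limit_prob_nonneg sum_limit_prob)
  finally show ?thesis
    unfolding prefix_pmf_def by (rule pmf_embed_pmf[OF limit_prob_nonneg])
qed

lemma measure_prefix_pmf: "measure (prefix_pmf T) Y = (\<Sum>v\<in>prefixes T \<inter> Y. limit_prob T v)"
proof -
  have "set_pmf (prefix_pmf T) \<subseteq> prefixes T"
    by (auto simp: set_pmf_iff pmf_prefix_pmf limit_prob_def split: if_splits)
  then have "Y \<inter> set_pmf (prefix_pmf T) = (prefixes T \<inter> Y) \<inter> set_pmf (prefix_pmf T)" by blast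
  then have "measure (prefix_pmf T) Y = measure (prefix_pmf T) (prefixes T \<inter> Y)"
    by (metis measure_Int_set_pmf)
  also have "\<dots> = (\<Sum>v\<in>prefixes T \<inter> Y. limit_prob T v)"
    by (simp add: measure_measure_pmf_finite finite_prefixes pmf_prefix_pmf)
  finally show ?thesis .
qed

lemma map_prefix_pmf:
  assumes "T \<le> T'"
  shows "map_pmf (\<lambda>v. restrict v (hists_upto T)) (prefix_pmf T') = prefix_pmf T"
proof (rule pmf_eqI)
  fix v
  have "prefixes T' \<inter> (\<lambda>v. restrict v (hists_upto T)) -` {v} = {v'\<in>prefixes T'. restrict v' (hists_upto T) = v}"
    by auto
  then show "pmf (map_pmf (\<lambda>v. restrict v (hists_upto T)) (prefix_pmf T')) v = pmf (prefix_pmf T) v"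
    by (simp add: pmf_map measure_prefix_pmf pmf_prefix_pmf limit_prob_consistent[OF assms])
qed

lemma map_prefix_pmf_restrict:
  assumes "H \<subseteq> hists_upto T" "T \<le> T'"
  shows "map_pmf (\<lambda>v. restrict v H) (prefix_pmf T') = map_pmf (\<lambda>v. restrict v H) (prefix_pmf T)"
proof -
  have "map_pmf (\<lambda>v. restrict v H) (map_pmf (\<lambda>v. restrict v (hists_upto T)) (prefix_pmf T'))
      = map_pmf (\<lambda>v. restrict v H) (prefix_pmf T')"
    using assms(1) by (simp add: map_pmf_comp Int_absorb1)
  then show ?thesis by (simp add: map_prefix_pmf[OF assms(2)])
qed

definition level :: "'s hist set \<Rightarrow> nat" where
  "level H = Max (insert 0 (hlen ` H))"

lemma subset_hists_upto_level: "finite H \<Longrightarrow> H \<subseteq> hists_upto (level H)"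
  unfolding level_def hists_upto_def by (auto intro: Max_ge)

abbreviation "M_on H \<equiv> Pi\<^sub>M H (\<lambda>_. (borel :: (real^'n) measure))"

definition marginal :: "'s hist set \<Rightarrow> ('s hist \<Rightarrow> real^'n) measure" where
  "marginal H = distr (measure_pmf (prefix_pmf (level H))) (M_on H) (\<lambda>v. restrict v H)"

lemma marginal_eq:
  assumes "finite H" "H \<subseteq> hists_upto T"
  shows "marginal H = distr (measure_pmf (prefix_pmf T)) (M_on H) (\<lambda>v. restrict v H)"
  unfolding marginal_def
proof (rule distr_measure_pmf_eq)
  show "map_pmf (\<lambda>v. restrict v H) (prefix_pmf (level H)) = map_pmf (\<lambda>v. restrict v H) (prefix_pmf T)"
    using map_prefix_pmf_restrict[OF subset_hists_upto_level[OF assms(1)], of T]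
      map_prefix_pmf_restrict[OF assms(2), of "level H"]
    by (cases "level H \<le> T") auto
qed (simp_all add: space_PiM)

lemma prob_space_marginal: "prob_space (marginal H)"
  unfolding marginal_def by (rule measure_pmf.prob_space_distr) (simp add: space_PiM)

lemma marginal_projective:
  assumes "H \<subseteq> H'" "finite H'"
  shows "marginal H = distr (marginal H') (M_on H) (\<lambda>f. restrict f H)"
proof -
  have "finite H" using assms by (rule finite_subset)
  have "distr (marginal H') (M_on H) (\<lambda>f. restrict f H)
      = distr (measure_pmf (prefix_pmf (level H'))) (M_on H) ((\<lambda>f. restrict f H) \<circ> (\<lambda>v. restrict v H'))"
    unfolding marginal_def
    by (rule distr_distr) (auto intro: measurable_restrict_subset[OF assms(1)] simp: space_PiM)
  also have "\<dots> = marginal H"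
  proof -
    have "H \<subseteq> hists_upto (level H')"
      using subset_hists_upto_level[OF assms(2)] assms(1) by blast
    then show ?thesis
      using marginal_eq[OF \<open>finite H\<close>] Int_absorb1[OF assms(1)] by (simp add: comp_def)
  qed
  finally show ?thesis ..
qed

sublocale K: polish_projective UNIV marginal
  unfolding polish_projective_def
  by (rule projective_family.intro) (auto intro: marginal_projective prob_space_marginal)

lemma emeasure_lim_restrict:
  assumes "finite H" "Y \<in> sets (M_on H)"
  shows "emeasure K.lim {a. restrict a H \<in> Y} = emeasure (marginal H) Y"
  using K.emeasure_lim_emb[OF subset_UNIV assms] by (simp add: prod_emb_def space_PiM vimage_def)

lemma sets_lim: "sets K.lim = sets M_all"
  by (rule K.sets_lim)

lemma space_lim: "space K.lim = UNIV"
  using sets_eq_imp_space_eq[OF sets_lim] by (simp add: space_PiM)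

definition plans_upto :: "nat \<Rightarrow> ('s hist \<Rightarrow> real^'n) set" where
  "plans_upto T = {a. \<forall>h\<in>hists_upto T. a h \<in> A \<and> 0 \<le> p (state a h) (a h) (hlast h)}"

lemma plans_eq_INT: "plans = (\<Inter>T. plans_upto T)"
proof (intro equalityI subsetI)
  fix a
  assume a: "a \<in> (\<Inter>T. plans_upto T)"
  have "a h \<in> A \<and> 0 \<le> p (state a h) (a h) (hlast h)" for h
  proof -
    have "a \<in> plans_upto (hlen h)" using a by blast
    then show ?thesis unfolding plans_upto_def hists_upto_def by blast
  qed
  then show "a \<in> plans" by (simp add: Ainf_def)
qed (auto simp: plans_upto_def Ainf_def)

definition admissible_prefixes :: "nat \<Rightarrow> ('s hist \<Rightarrow> real^'n) set" where
  "admissible_prefixes T = (\<lambda>a. restrict a (hists_upto T)) ` plans_upto T"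

lemma plans_upto_eq: "plans_upto T = {a. restrict a (hists_upto T) \<in> admissible_prefixes T}"
proof (intro equalityI subsetI)
  fix a
  assume "a \<in> {a. restrict a (hists_upto T) \<in> admissible_prefixes T}"
  then obtain b where b: "b \<in> plans_upto T" and "restrict a (hists_upto T) = restrict b (hists_upto T)"
    by (auto simp: admissible_prefixes_def)
  then have agree: "\<forall>h\<in>hists_upto T. a h = b h" by (metis restrict_apply')
  show "a \<in> plans_upto T"
    unfolding plans_upto_def
  proof (intro CollectI ballI)
    fix h :: "'s hist"
    assume h: "h \<in> hists_upto T"
    then have "b h \<in> A \<and> 0 \<le> p (state b h) (b h) (hlast h)"
      using b unfolding plans_upto_def by blast
    moreover have "hlen h \<le> T" using h by (simp add: hists_upto_def)
    ultimately show "a h \<in> A \<and> 0 \<le> p (state a h) (a h) (hlast h)"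
      by (simp add: agree_on_hists_upto[OF agree])
  qed
qed (auto simp: admissible_prefixes_def)

lemma admissible_prefixes_in_sets: "admissible_prefixes T \<in> sets (M_on (hists_upto T))"
proof (rule finite_in_sets_PiM_borel[OF finite_hists_upto])
  have "admissible_prefixes T \<subseteq> PiE (hists_upto T) (\<lambda>_. A)"
    by (auto simp: admissible_prefixes_def plans_upto_def)
  then show "finite (admissible_prefixes T)"
    by (rule finite_subset) (intro finite_PiE finite_hists_upto A_fin)
  show "admissible_prefixes T \<subseteq> PiE (hists_upto T) (\<lambda>_. UNIV)"
    by (auto simp: admissible_prefixes_def)
qed

lemma emeasure_lim_plans_upto: "emeasure K.lim (plans_upto T) = 1"
proof -
  have "prefixes T \<inter> (\<lambda>v. restrict v (hists_upto T)) -` admissible_prefixes T = prefixes T"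
    by (auto simp: prefixes_def admissible_prefixes_def plans_eq_INT)
  then have "measure (prefix_pmf T) ((\<lambda>v. restrict v (hists_upto T)) -` admissible_prefixes T) = 1"
    by (simp add: measure_prefix_pmf sum_limit_prob)
  then show ?thesis
    unfolding plans_upto_eq
    by (simp add: emeasure_lim_restrict[OF finite_hists_upto admissible_prefixes_in_sets]
        marginal_eq[OF finite_hists_upto order_refl] emeasure_distr admissible_prefixes_in_sets
        space_PiM measure_pmf.emeasure_eq_measure)
qed

lemma plans_in_sets: "plans \<in> sets M_all"
proof -
  have "plans_upto T \<in> sets M_all" for T
    unfolding plans_upto_eq using measurable_prod_emb[OF subset_UNIV admissible_prefixes_in_sets]
    by (simp add: prod_emb_def space_PiM vimage_def)
  then show ?thesis unfolding plans_eq_INT by (intro sets.countable_INT) auto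
qed

lemma AE_lim_plans: "AE a in K.lim. a \<in> plans"
proof -
  have "AE a in K.lim. a \<in> plans_upto T" for T
    using K.P.AE_prob_1[of "plans_upto T"] emeasure_lim_plans_upto[of T]
    by (simp add: K.P.emeasure_eq_measure)
  then show ?thesis by (simp add: AE_all_countable plans_eq_INT)
qed

definition limit_lottery :: "('s hist \<Rightarrow> real^'n) measure" where
  "limit_lottery = restrict_space K.lim plans"

lemma prob_space_limit_lottery: "prob_space limit_lottery"
  unfolding limit_lottery_def
  using plans_in_sets AE_lim_plans K.P.emeasure_eq_1_AE
  by (intro prob_space_restrict_space) (simp_all add: sets_lim)

lemma sets_limit_lottery: "sets limit_lottery = sets M_plans"
  unfolding limit_lottery_def by (rule sets_restrict_space_cong[OF sets_lim])

lemma space_limit_lottery: "space limit_lottery = plans"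
  unfolding limit_lottery_def by (simp add: space_restrict_space space_lim space_PiM)

lemma measure_limit_lottery_cylinder:
  assumes v: "v \<in> prefixes T"
  shows "measure limit_lottery (cylinder T v \<inter> plans) = limit_prob T v"
proof -
  have singleton: "{v} \<in> sets (M_on (hists_upto T))"
    by (rule finite_in_sets_PiM_borel[OF finite_hists_upto]) (use v prefixes_subset_PiE in auto)
  have "measure limit_lottery (cylinder T v \<inter> plans) = measure K.lim (cylinder T v \<inter> plans)"
    unfolding limit_lottery_def
    by (rule measure_restrict_space) (auto simp: space_lim plans_in_sets sets_lim)
  also have "\<dots> = measure K.lim (cylinder T v)"
    using AE_lim_plans cylinder_in_sets[of T v] plans_in_sets
    by (intro measure_eq_AE) (auto simp: sets_lim)
  also have "\<dots> = measure K.lim {a. restrict a (hists_upto T) \<in> {v}}"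
  proof -
    have "cylinder T v = {a. restrict a (hists_upto T) \<in> {v}}"
      using mem_cylinder_iff[OF v] by auto
    then show ?thesis by simp
  qed
  also have "\<dots> = measure (prefix_pmf T) ((\<lambda>w. restrict w (hists_upto T)) -` {v})"
  proof -
    have "emeasure K.lim {a. restrict a (hists_upto T) \<in> {v}} = emeasure (marginal (hists_upto T)) {v}"
      by (rule emeasure_lim_restrict[OF finite_hists_upto singleton])
    also have "\<dots> = emeasure (prefix_pmf T) ((\<lambda>w. restrict w (hists_upto T)) -` {v})"
      by (simp add: marginal_eq[OF finite_hists_upto order_refl] emeasure_distr singleton space_PiM)
    finally show ?thesis unfolding measure_def by simp
  qed
  also have "prefixes T \<inter> (\<lambda>w. restrict w (hists_upto T)) -` {v} = {v}"
    using v by (auto simp: prefixes_def)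
  then have "measure (prefix_pmf T) ((\<lambda>w. restrict w (hists_upto T)) -` {v}) = limit_prob T v"
    by (simp add: measure_prefix_pmf)
  finally show ?thesis .
qed

lemma integral_limit_lottery_depends_upto:
  assumes G: "depends_upto T G"
  shows "(\<integral>a. G a \<partial>limit_lottery) = (\<Sum>v\<in>prefixes T. G (extension T v) * limit_prob T v)"
proof -
  interpret prob_space limit_lottery by (rule prob_space_limit_lottery)
  have sets: "cylinder T v \<inter> plans \<in> sets limit_lottery" for v
    using cylinder_in_sets[of T v] by (auto simp: sets_limit_lottery sets_restrict_space)
  have "(\<integral>a. G a \<partial>limit_lottery)
      = (\<integral>a. (\<Sum>v\<in>prefixes T. G (extension T v) * indicator (cylinder T v \<inter> plans) a) \<partial>limit_lottery)"
    by (intro Bochner_Integration.integral_cong refl)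
       (simp add: space_limit_lottery depends_upto_eq_sum[OF G] indicator_def)
  also have "\<dots> = (\<Sum>v\<in>prefixes T. G (extension T v) * measure limit_lottery (cylinder T v \<inter> plans))"
    using sets by (simp add: emeasure_eq_measure)
  also have "\<dots> = (\<Sum>v\<in>prefixes T. G (extension T v) * limit_prob T v)"
    by (simp add: measure_limit_lottery_cylinder)
  finally show ?thesis .
qed

lemma list_avg_tendsto_integral:
  assumes F: "cylinder_approximable F" and B: "\<And>a. a \<in> plans \<Longrightarrow> \<bar>F a\<bar> \<le> B"
  shows "(\<lambda>k. list_avg (Ls (subseq k)) F) \<longlonglongrightarrow> (\<integral>a. F a \<partial>limit_lottery)"
proof (rule LIMSEQ_uniform_approx)
  fix e :: real
  assume "e > 0"
  then obtain T G where G: "depends_upto T G" "\<And>a. a \<in> plans \<Longrightarrow> \<bar>F a - G a\<bar> \<le> e"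
    using F unfolding cylinder_approximable_def by blast
  have limit_lottery: "prob_space limit_lottery" "sets limit_lottery = sets M_plans"
    by (simp_all add: prob_space_limit_lottery sets_limit_lottery)
  have "cylinder_approximable G"
    using depends_upto_imp_cylinder_approximable[OF G(1)] .
  moreover have "\<bar>G a\<bar> \<le> B + e" if "a \<in> plans" for a
    using G(2)[OF that] B[OF that] by linarith
  ultimately have "integrable limit_lottery G"
    by (rule integrable_cylinder_approximable[OF limit_lottery])
  then have "\<bar>(\<integral>a. F a \<partial>limit_lottery) - (\<integral>a. G a \<partial>limit_lottery)\<bar> \<le> e"
    using integrable_cylinder_approximable[OF limit_lottery F B] G(2)
    by (intro abs_integral_diff_le[OF limit_lottery(1)]) (auto simp: space_limit_lottery)
  moreover have "(\<lambda>k. list_avg (Ls (subseq k)) G) \<longlonglongrightarrow> (\<integral>a. G a \<partial>limit_lottery)"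
    unfolding list_avg_depends_upto[OF G(1)] integral_limit_lottery_depends_upto[OF G(1)]
    by (intro tendsto_sum tendsto_mult tendsto_const limit_prob_LIMSEQ)
  moreover have "\<bar>list_avg (Ls (subseq k)) F - list_avg (Ls (subseq k)) G\<bar> \<le> e" for k
    using Ls_nonempty Ls_plans G(2) by (intro abs_list_avg_diff_le) auto
  ultimately show "\<exists>g m. g \<longlonglongrightarrow> m \<and> (\<forall>k. \<bar>list_avg (Ls (subseq k)) F - g k\<bar> \<le> e)
      \<and> \<bar>(\<integral>a. F a \<partial>limit_lottery) - m\<bar> \<le> e"
    by blast
qed

lemma inverse_subseq_LIMSEQ: "(\<lambda>k. inverse (real (Suc (subseq k)))) \<longlonglongrightarrow> 0"
  using LIMSEQ_subseq_LIMSEQ[OF LIMSEQ_inverse_real_of_nat subseq(1)] by (simp add: comp_def)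

lemma lottery_feasible_limit_lottery:
  assumes slack: "\<And>N h as i. h \<in> hists_upto N \<Longrightarrow> fst h = s0 \<Longrightarrow> as \<in> action_lists (hlen h) \<Longrightarrow> i < I \<Longrightarrow>
    - inverse (real (Suc N)) \<le> list_avg (Ls N) (constraint_slack i h as)"
  shows "feasible_lottery limit_lottery"
proof -
  have lower: "(\<lambda>k. - inverse (real (Suc (subseq k)))) \<longlonglongrightarrow> 0"
    using tendsto_minus[OF inverse_subseq_LIMSEQ] by simp
  have "0 \<le> (\<integral>a. constraint_slack i h as a \<partial>limit_lottery)"
    if h: "fst h = s0" "as \<in> action_lists (hlen h)" and i: "i < I" for h as i
  proof (rule LIMSEQ_le[OF lower])
    show "(\<lambda>k. list_avg (Ls (subseq k)) (constraint_slack i h as)) \<longlonglongrightarrow> (\<integral>a. constraint_slack i h as a \<partial>limit_lottery)"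
      by (rule list_avg_tendsto_integral[OF cylinder_approximable_constraint_slack[OF i]
            abs_constraint_slack_le[OF _ i]])
    have "h \<in> hists_upto (subseq k)" if "k \<ge> hlen h" for k
      using that seq_suble[OF subseq(1), of k] by (simp add: hists_upto_def)
    then show "\<exists>N. \<forall>k\<ge>N. - inverse (real (Suc (subseq k))) \<le> list_avg (Ls (subseq k)) (constraint_slack i h as)"
      using slack h i by blast
  qed
  then have "\<forall>t. \<forall>(h, as)\<in>preH A t. fst h = s0 \<longrightarrow>
      (\<forall>i<I. 0 \<le> (\<integral>a. constraint_slack i h as a \<partial>limit_lottery))"
    by (simp add: preH_eq shock_hists_def)
  then show ?thesis
    using prob_space_limit_lottery sets_limit_lottery sets_M_plans
    unfolding lottery_feasible_def constraint_slack_def by simp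
qed

lemma le_integral_limit_lottery:
  assumes "\<And>N. c - inverse (real (Suc N)) \<le> list_avg (Ls N) J"
  shows "c \<le> (\<integral>a. J a \<partial>limit_lottery)"
proof (rule LIMSEQ_le)
  show "(\<lambda>k. c - inverse (real (Suc (subseq k)))) \<longlonglongrightarrow> c"
    using tendsto_diff[OF tendsto_const inverse_subseq_LIMSEQ, of c] by simp
  show "(\<lambda>k. list_avg (Ls (subseq k)) J) \<longlonglongrightarrow> (\<integral>a. J a \<partial>limit_lottery)"
    by (rule list_avg_tendsto_integral[OF cylinder_approximable_Jval Jval_bounds(2)])
qed (use assms in auto)

end

context lottery_duality
begin

lemma le_Vval_of_less_Dval:
  assumes c: "ereal c < Dval tp \<beta> A p \<zeta> r I g gbar \<gamma> x0 s0"
  shows "ereal c \<le> Vval tp \<beta> A p \<zeta> r I g gbar \<gamma> x0 s0"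
proof -
  define good where "good N L \<longleftrightarrow> L \<noteq> [] \<and> set L \<subseteq> plans \<and> c - inverse (real (Suc N)) \<le> list_avg L J \<and>
    (\<forall>h as i. h \<in> hists_upto N \<longrightarrow> fst h = s0 \<longrightarrow> as \<in> action_lists (hlen h) \<longrightarrow> i < I \<longrightarrow>
      - inverse (real (Suc N)) \<le> list_avg L (constraint_slack i h as))" for N L
  have "\<exists>L. good N L" for N
    by (rule finite_mixture_exists[OF c, where e="inverse (real (Suc N))" and T=N])
       (auto simp: good_def)
  then obtain Ls where Ls: "\<And>N. good N (Ls N)" by metis
  interpret mixture_sequence tp A X \<zeta> p r I g gbar \<beta> \<gamma> x0 s0 Br Bg Ls
    by unfold_locales (use Ls in \<open>auto simp: good_def\<close>)
  have "ereal c \<le> ereal (\<integral>a. J a \<partial>limit_lottery)"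
    using le_integral_limit_lottery Ls unfolding good_def by simp
  also have "\<dots> \<le> Vval tp \<beta> A p \<zeta> r I g gbar \<gamma> x0 s0"
    unfolding Vval_def Jval_def[symmetric]
    by (rule SUP_upper, rule CollectI, rule lottery_feasible_limit_lottery) (use Ls in \<open>auto simp: good_def\<close>)
  finally show ?thesis .
qed

lemma Vval_eq_Dval: "Vval tp \<beta> A p \<zeta> r I g gbar \<gamma> x0 s0 = Dval tp \<beta> A p \<zeta> r I g gbar \<gamma> x0 s0"
proof (rule antisym[OF Vval_le_Dval], rule ccontr)
  assume "\<not> Dval tp \<beta> A p \<zeta> r I g gbar \<gamma> x0 s0 \<le> Vval tp \<beta> A p \<zeta> r I g gbar \<gamma> x0 s0"
  then obtain c where c: "Vval tp \<beta> A p \<zeta> r I g gbar \<gamma> x0 s0 < ereal c"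
    "ereal c < Dval tp \<beta> A p \<zeta> r I g gbar \<gamma> x0 s0"
    using ereal_dense2[of "Vval tp \<beta> A p \<zeta> r I g gbar \<gamma> x0 s0"] by (auto simp: not_le)
  then show False using le_Vval_of_less_Dval[OF c(2)] by simp
qed

end

theorem theorem4p5:
  fixes tp :: "'s::finite \<Rightarrow> 's \<Rightarrow> real"
    and A :: "(real^'n) set" and X :: "(real^'m) set"
    and \<zeta> :: "real^'m \<Rightarrow> real^'n \<Rightarrow> 's \<Rightarrow> real^'m"
    and p r :: "real^'m \<Rightarrow> real^'n \<Rightarrow> 's \<Rightarrow> real"
    and I :: nat and g :: "nat \<Rightarrow> real^'m \<Rightarrow> real^'n \<Rightarrow> 's \<Rightarrow> real"
    and gbar :: "nat \<Rightarrow> real" and \<beta> :: real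
    and \<gamma> :: "nat \<Rightarrow> real" and x0 :: "real^'m" and s0 :: 's
  assumes trans_pos: "\<And>s s'. tp s s' > 0"
    and trans_sum: "\<And>s. (\<Sum>s'\<in>UNIV. tp s s') = 1"
    and A_fin: "finite A"
    and X_count: "countable X"
    and \<zeta>_X: "\<And>x a s. x \<in> X \<Longrightarrow> a \<in> A \<Longrightarrow> \<zeta> x a s \<in> X"
    and r_bdd: "\<exists>B. \<forall>x\<in>X. \<forall>a\<in>A. \<forall>s. \<bar>r x a s\<bar> \<le> B"
    and g_bdd: "\<And>i. i < I \<Longrightarrow> \<exists>B. \<forall>x\<in>X. \<forall>a\<in>A. \<forall>s. \<bar>g i x a s\<bar> \<le> B"
    and \<beta>: "0 < \<beta>" "\<beta> < 1"
    and standing: "\<And>x s. x \<in> X \<Longrightarrow> \<exists>a. feasible_plan tp \<beta> A p \<zeta> I g gbar x s a"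
    and \<gamma>_nonneg: "\<And>i. i < I \<Longrightarrow> \<gamma> i \<ge> 0"
    and x0: "x0 \<in> X"
  shows "Vval tp \<beta> A p \<zeta> r I g gbar \<gamma> x0 s0 = Dval tp \<beta> A p \<zeta> r I g gbar \<gamma> x0 s0"
proof -
  obtain Br where Br: "\<forall>x\<in>X. \<forall>a\<in>A. \<forall>s. \<bar>r x a s\<bar> \<le> Br"
    using r_bdd by blast
  obtain Bg where Bg: "0 \<le> Bg" "\<And>i y. i < I \<Longrightarrow> y \<in> X \<times> A \<times> UNIV \<Longrightarrow> \<bar>(case y of (x, a, s) \<Rightarrow> g i x a s)\<bar> \<le> Bg"
    by (rule uniform_bound_family[where I=I and f="\<lambda>i (x, a, s). g i x a s" and S="X \<times> A \<times> UNIV"]) (use g_bdd in force)+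
  interpret lottery_duality tp A X \<zeta> p r I g gbar \<beta> \<gamma> x0 s0 "\<bar>Br\<bar>" Bg
  proof
    show "\<bar>r x a s\<bar> \<le> \<bar>Br\<bar>" if "x \<in> X" "a \<in> A" for x a s
    proof -
      have "\<bar>r x a s\<bar> \<le> Br" using Br that by blast
      then show ?thesis using abs_ge_self[of Br] by linarith
    qed
    show "\<bar>g i x a s\<bar> \<le> Bg" if "i < I" "x \<in> X" "a \<in> A" for i x a s
      using Bg(2)[of i "(x, a, s)"] that by simp
  qed (use assms Bg(1) in auto)
  show ?thesis by (rule Vval_eq_Dval)
qed

end
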